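(* For each integer $N\ge2$ there exists a Lipschitz map $f:[0,1]\to\mathbb{R}^N$ with $f(0)=\mathbf{0}$ such that $\mathrm{Tan}(f([0,1]),\mathbf{0})=\mathfrak{C}_U(\mathbb{R}^N;\mathbf{0})$.
   Context: $\mathfrak{C}_U(\mathbb{R}^N;\mathbf{0})$ denotes the collection of all closed sets $X\subset\mathbb{R}^N$ with $\mathbf{0}\in X$ such that every connected component of $X$ is unbounded. With $\mathrm{exc}(A,B)=\sup_{a\in A}\inf_{b\in B}|a-b|$, closed sets $X_m\to X$ (Attouch–Wets) iff for every $r>0$, $\mathrm{exc}(X_m\cap\overline{B}(\mathbf{0},r),X)\to0$ and $\mathrm{exc}(X\cap\overline{B}(\mathbf{0},r),X_m)\to0$; a closed $T\ni\mathbf{0}$ belongs to $\mathrm{Tan}(X,x)$ if $r_j^{-1}(X-x)\to T$ for some $r_j\downarrow0$. *)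

theory Defs
  imports "HOL-Analysis.Analysis"
begin

text \<open>Excess of A over B: sup over a in A of inf over b in B of |a - b|,
  valued in [0,\<infinity>] (sup of empty set = 0, inf of empty set = \<infinity>).\<close>
definition exc :: "'a::metric_space set \<Rightarrow> 'a set \<Rightarrow> ennreal" where
  "exc A B = (SUP a\<in>A. INF b\<in>B. ennreal (dist a b))"

definition AW_converges :: "(nat \<Rightarrow> 'a::real_normed_vector set) \<Rightarrow> 'a set \<Rightarrow> bool" where
  "AW_converges Xs X \<longleftrightarrow>
     (\<forall>r>0. ((\<lambda>m. exc (Xs m \<inter> cball 0 r) X) \<longlongrightarrow> 0) sequentially \<and>
            ((\<lambda>m. exc (X \<inter> cball 0 r) (Xs m)) \<longlongrightarrow> 0) sequentially)"

definition Tan :: "'a::real_normed_vector set \<Rightarrow> 'a \<Rightarrow> 'a set set" where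
  "Tan X x = {T. closed T \<and> 0 \<in> T \<and>
     (\<exists>r::nat \<Rightarrow> real. (\<forall>j. r j > 0) \<and> decseq r \<and> r \<longlonglongrightarrow> 0 \<and>
        AW_converges (\<lambda>j. (\<lambda>y. (1 / r j) *\<^sub>R (y - x)) ` X) T)}"

definition CU :: "'a::real_normed_vector set set" where
  "CU = {X. closed X \<and> 0 \<in> X \<and> (\<forall>C\<in>components X. \<not> bounded C)}"

end

theory Submission
  imports Defs
begin

(* Fix a countable dense set D.  There are countably many finite families of polygonal chains with
   vertices in D, each chain starting far from the origin and avoiding it, one of them ending near
   it.  Enumerate these data so that each recurs infinitely often and turn the k-th datum into a
   polygonal gadget which, apart from its chains, stays outside a large ball.  Scaling the gadgets
   by rapidly decreasing factors puts them into disjoint nested annuli; joining consecutive ones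
   radially and concatenating dyadically yields a Lipschitz curve through 0.

   A closed set T with unbounded components is approximated at level j by such a datum: from a
   finite net of T inside the ball of radius j, run chains along the unbounded components out to
   distance j + 1.  Blowing the curve up at the scales where the approximating data recur gives T
   as a tangent.  Conversely the image of the curve is connected and contains a point other than
   0, so its blow-ups are connected and reach arbitrarily far; a bounded component of a tangent
   would be isolated by a gap which these blow-ups would have to cross. *)

section \<open>Excess and Attouch--Wets convergence\<close>

lemma exc_le_ennrealI:
  assumes "e \<ge> 0" "\<And>a. a \<in> A \<Longrightarrow> \<exists>b\<in>B. dist a b \<le> e"
  shows "exc A B \<le> ennreal e"
  unfolding exc_def
proof (rule SUP_least)
  fix a assume "a \<in> A"
  then obtain b where "b \<in> B" "dist a b \<le> e" using assms by blast
  then show "(INF b\<in>B. ennreal (dist a b)) \<le> ennreal e"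
    by (meson INF_lower2 ennreal_leI)
qed

lemma exc_less_ennrealD:
  assumes "exc A B < ennreal e" "a \<in> A"
  shows "\<exists>b\<in>B. dist a b < e"
proof -
  have "(INF b\<in>B. ennreal (dist a b)) \<le> exc A B"
    unfolding exc_def using assms(2) by (rule SUP_upper)
  then have "(INF b\<in>B. ennreal (dist a b)) < ennreal e" using assms(1) by order
  then obtain b where "b \<in> B" "ennreal (dist a b) < ennreal e"
    by (meson INF_less_iff)
  then show ?thesis
    by (metis ennreal_less_iff linorder_not_le order_less_le_trans zero_le_dist ennreal_le_iff)
qed

lemma exc_tendsto_0I:
  assumes "\<And>\<epsilon>. \<epsilon> > 0 \<Longrightarrow> \<forall>\<^sub>F m in sequentially. \<forall>a\<in>A m. \<exists>b\<in>B m. dist a b \<le> \<epsilon>"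
  shows "((\<lambda>m. exc (A m) (B m)) \<longlongrightarrow> 0) sequentially"
proof (rule order_tendstoI)
  fix y :: ennreal assume "0 < y"
  then obtain z where z: "0 < z" "z < y" using dense by blast
  then have "z < top" using top.not_eq_extremum by fastforce
  then have ez: "z = ennreal (enn2real z)" "enn2real z > 0"
    using z(1) by (auto simp: enn2real_positive_iff)
  show "\<forall>\<^sub>F m in sequentially. exc (A m) (B m) < y"
    using assms[OF ez(2)]
  proof eventually_elim
    case (elim m)
    then have "exc (A m) (B m) \<le> ennreal (enn2real z)"
      using ez(2) by (intro exc_le_ennrealI) auto
    then show ?case using ez(1) z(2) by order
  qed
qed simp

lemma exc_tendsto_0D:
  assumes "((\<lambda>m. exc (A m) (B m)) \<longlongrightarrow> 0) sequentially" "\<epsilon> > 0"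
  shows "\<forall>\<^sub>F m in sequentially. \<forall>a\<in>A m. \<exists>b\<in>B m. dist a b < \<epsilon>"
proof -
  have "\<forall>\<^sub>F m in sequentially. exc (A m) (B m) < ennreal \<epsilon>"
    using assms by (intro order_tendstoD(2)) auto
  then show ?thesis by eventually_elim (use exc_less_ennrealD in blast)
qed

lemma eventually_large_Suc:
  assumes "\<epsilon> > 0"
  shows "\<forall>\<^sub>F n in sequentially. R \<le> real (n + 1) \<and> 1 / real (n + 1) \<le> \<epsilon>"
proof -
  obtain N :: nat where N: "max R (1 / \<epsilon>) \<le> real N" using real_arch_simple by blast
  have "R \<le> real (n + 1) \<and> 1 / real (n + 1) \<le> \<epsilon>" if "N \<le> n" for n
  proof -
    have "max R (1 / \<epsilon>) \<le> real (n + 1)" using N that by linarith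
    then show ?thesis using assms by (auto simp: field_simps)
  qed
  then show ?thesis unfolding eventually_sequentially by blast
qed

section \<open>Tangent sets of connected sets\<close>

lemma bounded_component_isolated:
  fixes T :: "'a::euclidean_space set"
  assumes T: "closed T" and C: "C \<in> components T" and R: "C \<subseteq> ball 0 R"
  obtains V \<delta> where "compact V" "C \<subseteq> V" "V \<subseteq> ball 0 R" "\<delta> > 0"
    "\<And>x y. x \<in> V \<Longrightarrow> y \<in> T - V \<Longrightarrow> \<delta> \<le> dist x y"
proof -
  define K where "K = T \<inter> cball 0 (R + 1)"
  have "compact K" unfolding K_def using T by (simp add: closed_Int_compact)
  have "C \<subseteq> K" unfolding K_def using R in_components_subset[OF C] by auto
  then have CK: "C \<in> components K"
    by (rule components_intermediate_subset[OF C]) (auto simp: K_def)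
  have "compact C" using compact_components[OF \<open>compact K\<close> CK] .
  obtain V where V: "openin (top_of_set K) V" "compact V" "C \<subseteq> V" "V \<subseteq> ball 0 R"
    using Sura_Bura_clopen_subset[OF _ CK \<open>compact C\<close> _ R]
      closed_imp_locally_compact[OF compact_imp_closed[OF \<open>compact K\<close>]] by auto
  have "closedin (top_of_set K) (K - V)"
    using V(1) by (intro closedin_diff) auto
  then have "closed (K - V)"
    using \<open>compact K\<close> closedin_closed_trans compact_imp_closed by blast
  moreover have "T - V = (T - ball 0 R) \<union> (K - V)"
    using V(4) unfolding K_def by auto
  ultimately have "closed (T - V)" using T by (auto intro!: closed_Un closed_Diff)
  from separate_compact_closed[OF V(2) this]
  obtain \<delta> where "\<delta> > 0" "\<And>x y. x \<in> V \<Longrightarrow> y \<in> T - V \<Longrightarrow> \<delta> \<le> dist x y"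
    by blast
  then show thesis using that V(2-4) by blast
qed

text \<open>The connected set \<open>Y\<close> comes close to \<open>V\<close> and leaves \<open>V\<close> far behind, so it contains a point at
  distance exactly \<open>\<delta>/2\<close> from \<open>V\<close>; the gap keeps this point away from all of \<open>T\<close>.\<close>
lemma connected_crosses_gap:
  fixes Y :: "'a::euclidean_space set"
  assumes Y: "connected Y" "y0 \<in> Y" "y1 \<in> Y"
    and V: "compact V" "V \<noteq> {}" "V \<subseteq> ball 0 R" and "\<delta> > 0"
    and gap: "\<And>x t. x \<in> V \<Longrightarrow> t \<in> T - V \<Longrightarrow> \<delta> \<le> dist x t"
    and y01: "infdist y0 V \<le> \<delta>/2" "R + \<delta> < norm y1"
  obtains y where "y \<in> Y" "norm y \<le> R + \<delta>" "\<And>t. t \<in> T \<Longrightarrow> \<delta>/2 \<le> dist y t"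
proof -
  obtain v where v: "v \<in> V" "infdist y1 V = dist y1 v"
    using infdist_attains_inf[OF compact_imp_closed[OF V(1)] V(2)] by blast
  have "norm v < R" using v(1) V(3) by auto
  then have "\<delta>/2 \<le> infdist y1 V"
    using v(2) y01(2) norm_triangle_ineq2[of y1 v] \<open>\<delta> > 0\<close> unfolding dist_norm by linarith
  moreover have "connected ((\<lambda>y. infdist y V) ` Y)"
    by (intro connected_continuous_image[OF _ Y(1)] continuous_intros)
  ultimately have "\<delta>/2 \<in> (\<lambda>y. infdist y V) ` Y"
    using imageI[OF Y(2), of "\<lambda>y. infdist y V"] imageI[OF Y(3), of "\<lambda>y. infdist y V"] y01(1)
    unfolding connected_iff_interval by blast
  then obtain y where y: "y \<in> Y" "infdist y V = \<delta>/2" by (auto simp: image_iff)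
  obtain w where w: "w \<in> V" "infdist y V = dist y w"
    using infdist_attains_inf[OF compact_imp_closed[OF V(1)] V(2)] by blast
  have "norm w < R" using w(1) V(3) by auto
  then have "norm y \<le> R + \<delta>"
    using norm_triangle_sub[of y w] w(2) y(2) \<open>\<delta> > 0\<close> unfolding dist_norm by linarith
  moreover have "\<delta>/2 \<le> dist y t" if "t \<in> T" for t
  proof (cases "t \<in> V")
    case True
    then show ?thesis using infdist_le[OF True, of y] y(2) by simp
  next
    case False
    then show ?thesis
      using gap[OF w(1), of t] that dist_triangle[of w t y] w(2) y(2) by (simp add: dist_commute)
  qed
  ultimately show thesis by (rule that[OF y(1)])
qed

lemma Tan_connected_subset_CU:
  fixes X :: "'a::euclidean_space set"
  assumes X: "connected X" "q \<in> X" "q \<noteq> 0"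
  shows "Tan X 0 \<subseteq> CU"
proof
  fix T assume "T \<in> Tan X 0"
  then obtain r where T: "closed T" "0 \<in> T" and r: "\<And>j. r j > 0" "r \<longlonglongrightarrow> 0"
    and AW: "AW_converges (\<lambda>j. (\<lambda>y. (1 / r j) *\<^sub>R y) ` X) T"
    unfolding Tan_def by auto
  let ?Y = "\<lambda>j. (\<lambda>y. (1 / r j) *\<^sub>R y) ` X"
  have "\<not> bounded C" if C: "C \<in> components T" for C
  proof
    assume "bounded C"
    then obtain R where R: "R > 0" "C \<subseteq> ball 0 R" using bounded_subset_ballD by blast
    obtain V \<delta> where V: "compact V" "C \<subseteq> V" "V \<subseteq> ball 0 R" and \<delta>: "\<delta> > 0"
      and gap: "\<And>x y. x \<in> V \<Longrightarrow> y \<in> T - V \<Longrightarrow> \<delta> \<le> dist x y"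
      using bounded_component_isolated[OF T(1) C R(2)] by blast
    obtain p where "p \<in> C" using in_components_nonempty[OF C] by blast
    then have p: "p \<in> T \<inter> cball 0 (R + \<delta>)" "p \<in> V"
      using in_components_subset[OF C] V(2,3) \<delta> by auto
    have "\<forall>\<^sub>F j in sequentially. \<forall>a\<in>T \<inter> cball 0 (R + \<delta>). \<exists>b\<in>?Y j. dist a b < \<delta>/2"
      using AW R \<delta> unfolding AW_converges_def by (intro exc_tendsto_0D) auto
    moreover have "\<forall>\<^sub>F j in sequentially. \<forall>a\<in>?Y j \<inter> cball 0 (R + \<delta>). \<exists>b\<in>T. dist a b < \<delta>/2"
      using AW R \<delta> unfolding AW_converges_def by (intro exc_tendsto_0D) auto
    moreover have "\<forall>\<^sub>F j in sequentially. r j < norm q / (R + \<delta>)"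
      using r(2) X(3) R \<delta> by (intro order_tendstoD(2)) auto
    ultimately have "\<forall>\<^sub>F j in sequentially. False"
    proof eventually_elim
      case (elim j)
      obtain y0 where y0: "y0 \<in> ?Y j" "dist p y0 < \<delta>/2" using elim(1) p(1) by blast
      have near: "infdist y0 V \<le> \<delta>/2"
        using infdist_le[OF p(2), of y0] y0(2) by (simp add: dist_commute)
      have qY: "(1 / r j) *\<^sub>R q \<in> ?Y j" using X(2) by auto
      have far: "R + \<delta> < norm ((1 / r j) *\<^sub>R q)"
        using elim(3) r(1)[of j] R \<delta> by (simp add: field_simps)
      have conY: "connected (?Y j)"
        by (intro connected_continuous_image[OF _ X(1)] continuous_intros)
      obtain y where y: "y \<in> ?Y j" "norm y \<le> R + \<delta>" and apart: "\<And>t. t \<in> T \<Longrightarrow> \<delta>/2 \<le> dist y t"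
        using connected_crosses_gap[OF conY y0(1) qY V(1) _ V(3) \<delta> gap near far] p(2) by blast
      then have "y \<in> ?Y j \<inter> cball 0 (R + \<delta>)" by simp
      then obtain t where "t \<in> T" "dist y t < \<delta>/2" using elim(2) by blast
      then show False using apart by fastforce
    qed
    then show False by simp
  qed
  then show "T \<in> CU" unfolding CU_def using T by auto
qed

section \<open>Polygonal paths\<close>

fun polypath :: "'a::real_normed_vector list \<Rightarrow> real \<Rightarrow> 'a" where
  "polypath [] = linepath 0 0"
| "polypath [x] = linepath x x"
| "polypath (x # y # zs) = linepath x y +++ polypath (y # zs)"

fun polyset :: "'a::real_normed_vector list \<Rightarrow> 'a set" where
  "polyset [] = {}"
| "polyset [x] = {x}"
| "polyset (x # y # zs) = closed_segment x y \<union> polyset (y # zs)"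

lemma pathstart_polypath [simp]: "pathstart (polypath (x # xs)) = x"
  by (cases xs) auto

lemma pathfinish_polypath: "xs \<noteq> [] \<Longrightarrow> pathfinish (polypath xs) = last xs"
  by (induction xs rule: polypath.induct) auto

lemma path_image_polypath: "xs \<noteq> [] \<Longrightarrow> path_image (polypath xs) = polyset xs"
proof (induction xs rule: polypath.induct)
  case (3 x y zs)
  then show ?case by (simp add: path_image_join)
qed (auto simp: path_image_def linepath_def)

lemma set_subset_polyset: "set xs \<subseteq> polyset xs"
  by (induction xs rule: polyset.induct) auto

lemma polyset_eq_empty_iff [simp]: "polyset xs = {} \<longleftrightarrow> xs = []"
  by (induction xs rule: polyset.induct) auto

lemma compact_polyset: "compact (polyset xs)"
  by (induction xs rule: polyset.induct) (auto intro: compact_Un)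

lemma polyset_append:
  "xs \<noteq> [] \<Longrightarrow> ys \<noteq> [] \<Longrightarrow>
    polyset (xs @ ys) = polyset xs \<union> closed_segment (last xs) (hd ys) \<union> polyset ys"
proof (induction xs rule: polyset.induct)
  case (2 x)
  then show ?case by (cases ys) auto
qed auto

lemma polyset_append_subset1: "polyset xs \<subseteq> polyset (xs @ ys)"
  by (cases "xs = []"; cases "ys = []") (auto simp: polyset_append)

lemma polyset_append_subset2: "polyset ys \<subseteq> polyset (xs @ ys)"
  by (cases "xs = []"; cases "ys = []") (auto simp: polyset_append)

lemma polyset_Cons: "xs \<noteq> [] \<Longrightarrow> polyset (x # xs) = closed_segment x (hd xs) \<union> polyset xs"
  by (cases xs) auto

lemma polyset_scaleR: "polyset (map (scaleR c) xs) = scaleR c ` polyset xs"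
proof (induction xs rule: polyset.induct)
  case (3 x y zs)
  have "closed_segment (c *\<^sub>R x) (c *\<^sub>R y) = scaleR c ` closed_segment x y"
    by (rule closed_segment_linear_image) (simp add: linear_scaleR)
  with 3 show ?case by (simp add: image_Un)
qed auto

lemma polyset_subset_cball:
  "set xs \<subseteq> cball 0 B \<Longrightarrow> polyset xs \<subseteq> cball 0 B"
  by (induction xs rule: polyset.induct) (auto simp: closed_segment_subset convex_cball)

lemma polyset_subsetI:
  "successively (\<lambda>a b. closed_segment a b \<subseteq> G) xs \<Longrightarrow> set xs \<subseteq> G \<Longrightarrow> polyset xs \<subseteq> G"
  by (induction xs rule: polyset.induct) auto

lemma successively_closed_segment_subset_polyset:
  "successively (\<lambda>a b. closed_segment a b \<subseteq> polyset xs) xs"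
proof (induction xs rule: polyset.induct)
  case (3 x y zs)
  then show ?case by (auto elim!: successively_mono)
qed auto

lemma lipschitz_on_linepath: "(norm (b - a))-lipschitz_on S (linepath a b)"
proof (rule lipschitz_onI)
  fix s t
  have "linepath a b s - linepath a b t = (s - t) *\<^sub>R (b - a)"
    by (simp add: linepath_def algebra_simps)
  then show "dist (linepath a b s) (linepath a b t) \<le> norm (b - a) * dist s t"
    by (simp add: dist_norm dist_real_def)
qed simp

lemma lipschitz_on_joinpaths:
  assumes g1: "L-lipschitz_on {0..1} g1" and g2: "L-lipschitz_on {0..1} g2"
    and "g1 1 = g2 0"
  shows "(2 * L)-lipschitz_on {0..1} (g1 +++ g2)"
proof -
  have aff: "2-lipschitz_on U (\<lambda>x. 2 * x + c)" for U and c :: real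
    by (rule lipschitz_onI) (auto simp: dist_real_def abs_if)
  have "(L * 2)-lipschitz_on {0..1/2} (g1 \<circ> (\<lambda>x. 2 * x + 0))"
    by (rule lipschitz_on_compose[OF aff lipschitz_on_subset[OF g1]]) auto
  moreover have "(L * 2)-lipschitz_on {1/2..1} (g2 \<circ> (\<lambda>x. 2 * x + -1))"
    by (rule lipschitz_on_compose[OF aff lipschitz_on_subset[OF g2]]) auto
  ultimately have "(L * 2)-lipschitz_on {0..1/2} (\<lambda>x. g1 (2 * x))"
    and "(L * 2)-lipschitz_on {1/2..1} (\<lambda>x. g2 (2 * x - 1))"
    by (simp_all add: o_def)
  from lipschitz_on_concat[OF this]
  have "(L * 2)-lipschitz_on {0..1} (\<lambda>x. if x \<le> 1/2 then g1 (2 * x) else g2 (2 * x - 1))"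
    using assms(3) by simp
  then show ?thesis unfolding joinpaths_def by (simp add: mult.commute)
qed

lemma lipschitz_on_polypath:
  assumes "set xs \<subseteq> cball 0 B" "0 \<le> B"
  shows "(2 ^ length xs * (2 * B))-lipschitz_on {0..1} (polypath xs)"
  using assms
proof (induction xs rule: polypath.induct)
  case 1
  then show ?case by (intro lipschitz_onI) (auto simp: linepath_def)
next
  case (2 x)
  then show ?case using lipschitz_on_mono[OF lipschitz_on_linepath[of x x "{0..1}"]] by auto
next
  case (3 x y zs)
  have "norm (y - x) \<le> 2 * B" using 3(2) norm_triangle_ineq4[of y x] by auto
  also have "\<dots> \<le> 2 ^ length (y # zs) * (2 * B)"
  proof -
    have "(1::real) \<le> 2 ^ length (y # zs)" by (rule one_le_power) simp
    from mult_right_mono[OF this, of "2 * B"] show ?thesis using 3(3) by simp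
  qed
  finally have "(2 ^ length (y # zs) * (2 * B))-lipschitz_on {0..1} (linepath x y)"
    using lipschitz_on_mono[OF lipschitz_on_linepath order_refl] by blast
  moreover have "linepath x y 1 = polypath (y # zs) 0"
    using pathstart_polypath[of y zs] by (simp add: pathstart_def linepath_def)
  ultimately show ?case
    using lipschitz_on_joinpaths 3 by (fastforce simp: mult.assoc)
qed

section \<open>Concatenating infinitely many paths\<close>

definition dyadic_index :: "real \<Rightarrow> nat" where
  "dyadic_index t = (LEAST k. (1/2::real) ^ Suc k < t)"

lemma dyadic_index_eqI:
  assumes "(1/2::real) ^ Suc k < t" "t \<le> (1/2) ^ k"
  shows "dyadic_index t = k"
  unfolding dyadic_index_def
proof (rule Least_equality)
  fix m assume m: "(1/2::real) ^ Suc m < t"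
  show "k \<le> m"
  proof (rule ccontr)
    assume "\<not> k \<le> m"
    then have "(1/2::real) ^ k \<le> (1/2) ^ Suc m" by (intro power_decreasing) auto
    then show False using m assms(2) by simp
  qed
qed (fact assms(1))

lemma dyadic_index_bounds:
  assumes "0 < t" "t \<le> 1"
  shows "(1/2::real) ^ Suc (dyadic_index t) < t" "t \<le> (1/2) ^ dyadic_index t"
proof -
  obtain k where "(1/2::real) ^ k < t" using real_arch_pow_inv[of t "1/2"] assms by auto
  moreover have "(1/2::real) ^ Suc k \<le> (1/2) ^ k" by (rule power_decreasing) auto
  ultimately have "(1/2::real) ^ Suc k < t" by linarith
  then show "(1/2::real) ^ Suc (dyadic_index t) < t" unfolding dyadic_index_def by (rule LeastI)
  show "t \<le> (1/2) ^ dyadic_index t"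
  proof (cases "dyadic_index t")
    case (Suc m)
    have "\<not> (1/2::real) ^ Suc m < t"
    proof
      assume "(1/2::real) ^ Suc m < t"
      then have "dyadic_index t \<le> m" unfolding dyadic_index_def by (rule Least_le)
      then show False using Suc by simp
    qed
    then show ?thesis using Suc by simp
  qed (use assms in simp)
qed

lemma dyadic_rescale_mem:
  assumes "(1/2::real) ^ Suc n \<le> t" "t \<le> (1/2) ^ n"
  shows "2 - 2 ^ Suc n * t \<in> {0..1}"
proof -
  have "2 ^ Suc n * (1/2::real) ^ Suc n \<le> 2 ^ Suc n * t" "2 ^ Suc n * t \<le> 2 ^ Suc n * (1/2::real) ^ n"
    using assms by simp_all
  then show ?thesis by (simp add: power_one_over)
qed

text \<open>The \<open>n\<close>-th path is run on \<open>[2^-(n+1), 2^-n]\<close>, from its start at \<open>2^-n\<close> to its end at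
  \<open>2^-(n+1)\<close>, so that consecutive paths are traversed towards the origin.\<close>
definition dyadic_concat :: "(nat \<Rightarrow> real \<Rightarrow> 'a::zero) \<Rightarrow> real \<Rightarrow> 'a" where
  "dyadic_concat p t =
     (if t \<le> 0 then 0 else p (dyadic_index t) (2 - 2 ^ Suc (dyadic_index t) * t))"

lemma dyadic_concat_0 [simp]: "dyadic_concat p 0 = 0"
  by (simp add: dyadic_concat_def)

lemma dyadic_concat_eq:
  assumes match: "\<And>k. p k 1 = p (Suc k) 0"
    and t: "(1/2::real) ^ Suc n \<le> t" "t \<le> (1/2) ^ n"
  shows "dyadic_concat p t = p n (2 - 2 ^ Suc n * t)"
proof -
  have "t > 0" using t(1) zero_less_power[of "1/2::real" "Suc n"] by linarith
  show ?thesis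
  proof (cases "t = (1/2) ^ Suc n")
    case True
    have "(1/2::real) ^ Suc (Suc n) < t"
      unfolding True by (rule power_strict_decreasing) auto
    then have "dyadic_index t = Suc n" by (rule dyadic_index_eqI) (simp add: True)
    then have "dyadic_concat p t = p (Suc n) (2 - 2 ^ Suc (Suc n) * t)"
      using \<open>t > 0\<close> by (simp add: dyadic_concat_def)
    moreover have "2 - 2 ^ Suc (Suc n) * t = 0" "2 - 2 ^ Suc n * t = 1"
      unfolding True by (simp_all add: power_one_over)
    ultimately show ?thesis by (simp only: match)
  next
    case False
    then have "dyadic_index t = n" using t by (intro dyadic_index_eqI) auto
    then show ?thesis using \<open>t > 0\<close> by (simp add: dyadic_concat_def)
  qed
qed

lemma dyadic_concat_image:
  assumes match: "\<And>k. p k 1 = p (Suc k) 0"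
  shows "dyadic_concat p ` {0..1} = insert 0 (\<Union>k. p k ` {0..1})"
proof (intro equalityI subsetI)
  fix z assume "z \<in> dyadic_concat p ` {0..1}"
  then obtain t where t: "t \<in> {0..1}" "z = dyadic_concat p t" by auto
  show "z \<in> insert 0 (\<Union>k. p k ` {0..1})"
  proof (cases "t = 0")
    case False
    then have "(1/2::real) ^ Suc (dyadic_index t) \<le> t" "t \<le> (1/2) ^ dyadic_index t"
      using dyadic_index_bounds[of t] t(1) by auto
    then show ?thesis
      using t(2) dyadic_concat_eq[of p, OF match] dyadic_rescale_mem by blast
  qed (use t in simp)
next
  fix z assume "z \<in> insert 0 (\<Union>k. p k ` {0..1})"
  then consider "z = 0" | k s where "s \<in> {0..1}" "z = p k s" by auto
  then show "z \<in> dyadic_concat p ` {0..1}"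
  proof cases
    case 1
    then show ?thesis by (metis dyadic_concat_0 atLeastAtMost_iff image_eqI order_refl zero_le_one)
  next
    case 2
    define t where "t = (2 - s) / 2 ^ Suc k"
    have "(1::real) / 2 ^ Suc k \<le> (2 - s) / 2 ^ Suc k" "(2 - s) / 2 ^ Suc k \<le> (2::real) / 2 ^ Suc k"
      using 2(1) by (intro divide_right_mono; simp)+
    then have t: "(1/2::real) ^ Suc k \<le> t" "t \<le> (1/2) ^ k"
      by (auto simp: t_def power_one_over)
    moreover have "(1/2::real) ^ k \<le> 1" by (rule power_le_one) auto
    moreover have "(0::real) \<le> (1/2) ^ Suc k" by simp
    ultimately have "t \<in> {0..1}" by auto
    moreover have "dyadic_concat p t = z"
      using dyadic_concat_eq[of p, OF match t] 2(2) by (simp add: t_def)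
    ultimately show ?thesis by blast
  qed
qed

lemma norm_dyadic_concat_le:
  assumes match: "\<And>k. p k 1 = p (Suc k) 0"
    and small: "\<And>k t. t \<in> {0..1} \<Longrightarrow> norm (p k t) \<le> (1/2) ^ Suc k"
    and t: "t \<in> {0..1}"
  shows "norm (dyadic_concat p t) \<le> t"
proof (cases "t = 0")
  case False
  define n where "n = dyadic_index t"
  have n: "(1/2::real) ^ Suc n \<le> t" "t \<le> (1/2) ^ n"
    using dyadic_index_bounds[of t] t False by (auto simp: n_def)
  then have "norm (dyadic_concat p t) \<le> (1/2) ^ Suc n"
    using small dyadic_rescale_mem dyadic_concat_eq[of p, OF match] by simp
  then show ?thesis using n by simp
qed simp

lemma lipschitz_on_dyadic_concat_tail:
  fixes p :: "nat \<Rightarrow> real \<Rightarrow> 'a::real_normed_vector"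
  assumes lip: "\<And>k. ((1/2) ^ Suc k)-lipschitz_on {0..1} (p k)"
    and match: "\<And>k. p k 1 = p (Suc k) 0"
  shows "1-lipschitz_on {(1/2::real) ^ n..1} (dyadic_concat p)"
proof (induction n)
  case (Suc n)
  let ?f = "dyadic_concat p"
  have "1-lipschitz_on {(1/2::real) ^ Suc n..(1/2) ^ n} ?f"
  proof (rule lipschitz_onI)
    fix x y
    assume x: "x \<in> {(1/2::real) ^ Suc n..(1/2) ^ n}" and y: "y \<in> {(1/2::real) ^ Suc n..(1/2) ^ n}"
    have "dist (?f x) (?f y) = dist (p n (2 - 2 ^ Suc n * x)) (p n (2 - 2 ^ Suc n * y))"
      using dyadic_concat_eq[of p, OF match] x y by auto
    also have "\<dots> \<le> (1/2) ^ Suc n * dist (2 - 2 ^ Suc n * x) (2 - 2 ^ Suc n * y)"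
      using dyadic_rescale_mem x y by (intro lipschitz_onD[OF lip]) auto
    also have "\<dots> = dist x y"
      by (simp add: dist_real_def abs_mult power_one_over flip: right_diff_distrib)
    finally show "dist (?f x) (?f y) \<le> 1 * dist x y" by simp
  qed simp
  from lipschitz_on_concat[OF this Suc]
  have "1-lipschitz_on {(1/2::real) ^ Suc n..1} (\<lambda>x. if x \<le> (1/2) ^ n then ?f x else ?f x)"
    by simp
  then show ?case by simp
qed (auto intro: lipschitz_onI)

lemma lipschitz_on_dyadic_concat:
  fixes p :: "nat \<Rightarrow> real \<Rightarrow> 'a::real_normed_vector"
  assumes lip: "\<And>k. ((1/2) ^ Suc k)-lipschitz_on {0..1} (p k)"
    and match: "\<And>k. p k 1 = p (Suc k) 0"
    and small: "\<And>k t. t \<in> {0..1} \<Longrightarrow> norm (p k t) \<le> (1/2) ^ Suc k"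
  shows "1-lipschitz_on {0..1} (dyadic_concat p)"
proof (rule lipschitz_onI)
  fix x y :: real assume x: "x \<in> {0..1}" and y: "y \<in> {0..1}"
  show "dist (dyadic_concat p x) (dyadic_concat p y) \<le> 1 * dist x y"
  proof (cases "x = 0 \<or> y = 0")
    case True
    then show ?thesis
      using norm_dyadic_concat_le[of p, OF match small x] norm_dyadic_concat_le[of p, OF match small y] x y
      by (auto simp: dist_real_def dist_norm norm_minus_commute)
  next
    case False
    then obtain n where "(1/2::real) ^ n < min x y"
      using real_arch_pow_inv[of "min x y" "1/2"] x y by auto
    then show ?thesis
      using lipschitz_onD[OF lipschitz_on_dyadic_concat_tail[of p n, OF lip match], of x y] x y by auto
  qed
qed simp

section \<open>Chains of points\<close>

lemma connected_epsilon_chain: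
  fixes S :: "'a::metric_space set"
  assumes "connected S" "x \<in> S" "y \<in> S" "\<eta> > 0"
  shows "\<exists>cs. cs \<noteq> [] \<and> hd cs = x \<and> last cs = y \<and> set cs \<subseteq> S \<and>
           successively (\<lambda>a b. dist a b < \<eta>) cs"
proof -
  define R where "R a b \<longleftrightarrow> (\<exists>cs. cs \<noteq> [] \<and> hd cs = a \<and> last cs = b \<and> set cs \<subseteq> S \<and>
    successively (\<lambda>a b. dist a b < \<eta>) cs)" for a b
  have "R x y"
  proof (rule connected_equivalence_relation[OF assms(1-3)])
    fix a b assume "R a b"
    then obtain cs where "cs \<noteq> []" "hd cs = a" "last cs = b" "set cs \<subseteq> S"
        "successively (\<lambda>a b. dist a b < \<eta>) cs"
      unfolding R_def by blast
    then show "R b a" unfolding R_def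
      by (intro exI[where x="rev cs"]) (auto simp: hd_rev last_rev dist_commute)
  next
    fix a b c assume "R a b" "R b c"
    then obtain cs ds where cs: "cs \<noteq> []" "hd cs = a" "last cs = b" "set cs \<subseteq> S"
        "successively (\<lambda>a b. dist a b < \<eta>) cs"
      and ds: "ds \<noteq> []" "hd ds = b" "last ds = c" "set ds \<subseteq> S"
        "successively (\<lambda>a b. dist a b < \<eta>) ds"
      unfolding R_def by blast
    have "successively (\<lambda>a b. dist a b < \<eta>) (cs @ tl ds)"
      using cs ds by (cases ds) (auto simp: successively_append_iff successively_Cons)
    moreover have "last (cs @ tl ds) = c" using cs ds by (cases ds; cases "tl ds") auto
    ultimately show "R a c" unfolding R_def using cs ds
      by (intro exI[where x="cs @ tl ds"]) (auto dest: list.set_sel(2))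
  next
    fix a assume a: "a \<in> S"
    show "\<exists>T. openin (top_of_set S) T \<and> a \<in> T \<and> (\<forall>x\<in>T. R a x)"
    proof (intro exI[where x="S \<inter> ball a \<eta>"] conjI ballI)
      fix x assume "x \<in> S \<inter> ball a \<eta>"
      then show "R a x" unfolding R_def using a by (intro exI[where x="[a, x]"]) auto
    qed (use a assms(4) in \<open>auto simp: openin_open_Int\<close>)
  qed
  then show ?thesis unfolding R_def .
qed

lemma list_all2_hd_last:
  "list_all2 P xs ys \<Longrightarrow> xs \<noteq> [] \<Longrightarrow> ys \<noteq> [] \<and> P (hd xs) (hd ys) \<and> P (last xs) (last ys)"
proof (induction xs ys rule: list_all2_induct)
  case (Cons x xs y ys)
  then show ?case by (cases "xs = []") (auto dest: list_all2_lengthD)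
qed simp

lemma list_all2_set_rightD: "list_all2 P xs ys \<Longrightarrow> y \<in> set ys \<Longrightarrow> \<exists>x\<in>set xs. P x y"
  by (induction xs ys rule: list_all2_induct) auto

lemma successively_dist_list_all2:
  fixes xs ys :: "'a::metric_space list"
  assumes "list_all2 (\<lambda>a b. dist a b < \<gamma>) xs ys" "successively (\<lambda>a b. dist a b < \<eta>) xs"
  shows "successively (\<lambda>a b. dist a b \<le> \<eta> + 2 * \<gamma>) ys"
  using assms
proof (induction xs ys rule: list_all2_induct)
  case (Cons x xs y ys)
  show ?case
  proof (cases "xs = []")
    case False
    have h: "ys \<noteq> []" "dist (hd xs) (hd ys) < \<gamma>" using list_all2_hd_last[OF Cons(2) False] by auto
    have "dist x (hd xs) < \<eta>" using Cons(4) False by (simp add: successively_Cons)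
    moreover have "dist y (hd ys) \<le> dist y x + dist x (hd xs) + dist (hd xs) (hd ys)"
      using dist_triangle[of y "hd ys" x] dist_triangle[of x "hd ys" "hd xs"] by simp
    ultimately have "dist y (hd ys) \<le> \<eta> + 2 * \<gamma>" using Cons(1) h by (simp add: dist_commute)
    moreover have "successively (\<lambda>a b. dist a b \<le> \<eta> + 2 * \<gamma>) ys"
      using Cons(3,4) False by (simp add: successively_Cons)
    ultimately show ?thesis using h by (simp add: successively_Cons)
  qed (use Cons in simp)
qed simp

lemma polyset_near:
  fixes xs :: "'a::euclidean_space list"
  assumes "successively (\<lambda>a b. dist a b \<le> \<delta>) xs" "\<And>x. x \<in> set xs \<Longrightarrow> \<exists>t\<in>T. dist x t \<le> e"
    and "z \<in> polyset xs" "\<delta> \<ge> 0"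
  shows "\<exists>t\<in>T. dist z t \<le> \<delta> + e"
  using assms
proof (induction xs rule: polyset.induct)
  case (2 x)
  then show ?case by force
next
  case (3 x y zs)
  show ?case
  proof (cases "z \<in> closed_segment x y")
    case True
    then have "dist z x \<le> \<delta>" using 3(2) dist_in_closed_segment[of z x y] by simp
    moreover obtain t where "t \<in> T" "dist x t \<le> e" using 3(3) by auto
    ultimately show ?thesis using dist_triangle[of z t x] by (intro bexI[of _ t]) auto
  qed (use 3 in auto)
qed auto

lemma dense_avoiding_line:
  fixes h :: "'a::euclidean_space"
  assumes "2 \<le> DIM('a)" "\<And>U. open U \<Longrightarrow> U \<noteq> {} \<Longrightarrow> \<exists>d\<in>D. d \<in> U" "\<gamma> > 0"
  obtains d where "d \<in> D" "dist x d < \<gamma>" "d \<notin> span {h}"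
proof -
  have "ball x \<gamma> - span {h} \<noteq> {}"
  proof
    assume "ball x \<gamma> - span {h} = {}"
    then have "ball x \<gamma> \<subseteq> interior (span {h})" by (simp add: interior_maximal)
    moreover have "interior (span {h}) = {}"
      using assms(1) by (intro empty_interior_lowdim) (simp add: dim_span)
    ultimately show False using assms(3) by auto
  qed
  then show thesis using assms(2)[of "ball x \<gamma> - span {h}"] that by (auto simp: open_Diff)
qed

lemma zero_in_closed_segment_imp_span:
  assumes "0 \<in> closed_segment d (h :: 'a::real_vector)" "h \<noteq> 0"
  shows "d \<in> span {h}"
proof -
  obtain u where u: "0 \<le> u" "u \<le> 1" "(1 - u) *\<^sub>R d + u *\<^sub>R h = 0"
    using assms(1) unfolding closed_segment_def by auto
  then have "u \<noteq> 1" using assms(2) by auto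
  have "(1 - u) *\<^sub>R d = - (u *\<^sub>R h)" using u(3) by (simp add: eq_neg_iff_add_eq_0)
  then have "(1 / (1 - u)) *\<^sub>R ((1 - u) *\<^sub>R d) = (- u / (1 - u)) *\<^sub>R h" by simp
  then have "d = (- u / (1 - u)) *\<^sub>R h" using \<open>u \<noteq> 1\<close> by simp
  then show ?thesis by (metis span_base span_mul singletonI)
qed

lemma dense_perturbation_avoiding_0:
  fixes cs :: "'a::euclidean_space list"
  assumes "2 \<le> DIM('a)" "\<And>U. open U \<Longrightarrow> U \<noteq> {} \<Longrightarrow> \<exists>d\<in>D. d \<in> U"
    and "\<gamma> > 0" "cs \<noteq> []"
  shows "\<exists>cs'. list_all2 (\<lambda>a b. dist a b < \<gamma>) cs cs' \<and> set cs' \<subseteq> D \<and> 0 \<notin> polyset cs'"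
  using assms(4)
proof (induction cs rule: list_nonempty_induct)
  case (single x)
  obtain d where "d \<in> D" "dist x d < \<gamma>" "d \<notin> span {0}"
    using dense_avoiding_line[OF assms(1-3)] by blast
  then show ?case by (intro exI[where x="[d]"]) auto
next
  case (cons x xs)
  then obtain ys where ys: "list_all2 (\<lambda>a b. dist a b < \<gamma>) xs ys" "set ys \<subseteq> D" "0 \<notin> polyset ys"
    by blast
  have "ys \<noteq> []" using ys(1) cons(1) by (cases ys) auto
  then have h0: "hd ys \<noteq> 0" using ys(3) set_subset_polyset[of ys] hd_in_set by fastforce
  obtain d where d: "d \<in> D" "dist x d < \<gamma>" "d \<notin> span {hd ys}"
    using dense_avoiding_line[OF assms(1-3)] by blast
  then have "0 \<notin> polyset (d # ys)"
    using ys(3) \<open>ys \<noteq> []\<close> zero_in_closed_segment_imp_span[OF _ h0] by (auto simp: polyset_Cons)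
  then show ?case using d ys by (intro exI[where x="d # ys"]) auto
qed

section \<open>The gadget\<close>

lemma norm_closed_segment_sphere_ge:
  fixes a b :: "'a::real_inner"
  assumes "norm a = \<rho>" "norm b = \<rho>" "inner a b \<ge> 0" "z \<in> closed_segment a b"
  shows "\<rho>\<^sup>2 / 2 \<le> (norm z)\<^sup>2"
proof -
  obtain t where t: "0 \<le> t" "t \<le> 1" "z = (1 - t) *\<^sub>R a + t *\<^sub>R b"
    using assms(4) unfolding closed_segment_def by auto
  have "(norm z)\<^sup>2 = (1 - t)\<^sup>2 * inner a a + t\<^sup>2 * inner b b + 2 * t * (1 - t) * inner a b"
    unfolding power2_norm_eq_inner t(3)
    by (simp add: inner_add_left inner_add_right inner_commute power2_eq_square algebra_simps)
  also have "\<dots> = ((1 - t)\<^sup>2 + t\<^sup>2) * \<rho>\<^sup>2 + 2 * t * (1 - t) * inner a b"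
    using assms(1,2) by (simp add: algebra_simps flip: power2_norm_eq_inner)
  finally have eq: "(norm z)\<^sup>2 = ((1 - t)\<^sup>2 + t\<^sup>2) * \<rho>\<^sup>2 + 2 * t * (1 - t) * inner a b" .
  have "0 \<le> 2 * t * (1 - t) * inner a b" using t assms(3) by simp
  moreover have "1/2 \<le> (1 - t)\<^sup>2 + t\<^sup>2"
    using zero_le_power2[of "2 * t - 1"] by (simp add: power2_eq_square algebra_simps)
  then have "\<rho>\<^sup>2 / 2 \<le> ((1 - t)\<^sup>2 + t\<^sup>2) * \<rho>\<^sup>2"
    using mult_right_mono[of "1/2" "(1 - t)\<^sup>2 + t\<^sup>2" "\<rho>\<^sup>2"] by simp
  ultimately show ?thesis using eq by linarith
qed

lemma norm_closed_segment_radial: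
  fixes u :: "'a::real_normed_vector"
  assumes "0 \<le> a" "0 \<le> b" "z \<in> closed_segment (a *\<^sub>R u) (b *\<^sub>R u)"
  shows "min a b * norm u \<le> norm z" "norm z \<le> max a b * norm u"
proof -
  obtain t where t: "0 \<le> t" "t \<le> 1" "z = (1 - t) *\<^sub>R (a *\<^sub>R u) + t *\<^sub>R (b *\<^sub>R u)"
    using assms(3) unfolding closed_segment_def by auto
  have z: "z = ((1 - t) * a + t * b) *\<^sub>R u" using t(3) by (simp add: algebra_simps)
  have c: "0 \<le> (1 - t) * a + t * b" using t assms by simp
  have "(1 - t) * min a b \<le> (1 - t) * a" "t * min a b \<le> t * b" using t by (auto intro: mult_left_mono)
  then have "min a b \<le> (1 - t) * a + t * b" by (simp add: algebra_simps)
  then show "min a b * norm u \<le> norm z" using z c by (simp add: mult_right_mono)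
  have "(1 - t) * a \<le> (1 - t) * max a b" "t * b \<le> t * max a b" using t by (auto intro: mult_left_mono)
  then have "(1 - t) * a + t * b \<le> max a b" by (simp add: algebra_simps)
  then show "norm z \<le> max a b * norm u" using z c by (simp add: mult_right_mono)
qed

text \<open>For \<open>y = -x\<close> a unit vector orthogonal to \<open>x\<close> is used; it exists since the dimension is
  at least two.\<close>
definition sphere_mid :: "real \<Rightarrow> 'a::euclidean_space \<Rightarrow> 'a \<Rightarrow> 'a" where
  "sphere_mid \<rho> x y = (if x + y = 0 then \<rho> *\<^sub>R (SOME e. norm e = 1 \<and> inner x e = 0)
                       else (\<rho> / norm (x + y)) *\<^sub>R (x + y))"

lemma sphere_mid:
  fixes x y :: "'a::euclidean_space"
  assumes "2 \<le> DIM('a)" "norm x = \<rho>" "norm y = \<rho>" "\<rho> \<ge> 0"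
  shows "norm (sphere_mid \<rho> x y) = \<rho>"
    and "inner x (sphere_mid \<rho> x y) \<ge> 0" "inner y (sphere_mid \<rho> x y) \<ge> 0"
proof -
  have "norm (sphere_mid \<rho> x y) = \<rho> \<and>
      inner x (sphere_mid \<rho> x y) \<ge> 0 \<and> inner y (sphere_mid \<rho> x y) \<ge> 0"
  proof (cases "x + y = 0")
    case True
    obtain z where z: "z \<noteq> 0" "orthogonal x z" using orthogonal_to_vector_exists[OF assms(1)] by blast
    have "\<exists>e. norm e = 1 \<and> inner x e = 0"
      using z by (intro exI[where x="z /\<^sub>R norm z"]) (auto simp: orthogonal_def)
    then have e: "norm (SOME e. norm e = 1 \<and> inner x e = 0) = 1 \<and>
        inner x (SOME e. norm e = 1 \<and> inner x e = 0) = 0"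
      by (rule someI_ex)
    have y: "y = - x" using True by (simp add: eq_neg_iff_add_eq_0 add.commute)
    show ?thesis using True e assms(4) by (simp add: sphere_mid_def y)
  next
    case False
    have cs: "- inner x y \<le> norm x * norm y"
      using norm_cauchy_schwarz[of x "-y"] by simp
    have "inner x (x + y) \<ge> 0" "inner y (x + y) \<ge> 0"
      using cs assms
      by (simp_all add: inner_add_right inner_commute power2_eq_square flip: power2_norm_eq_inner)
    then show ?thesis using False assms(4) by (simp add: sphere_mid_def)
  qed
  then show "norm (sphere_mid \<rho> x y) = \<rho>"
    and "inner x (sphere_mid \<rho> x y) \<ge> 0" "inner y (sphere_mid \<rho> x y) \<ge> 0"
    by auto
qed

definition sphere_proj :: "real \<Rightarrow> 'a::real_normed_vector \<Rightarrow> 'a" where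
  "sphere_proj \<rho> x = (\<rho> / norm x) *\<^sub>R x"

lemma norm_sphere_proj: "x \<noteq> 0 \<Longrightarrow> \<rho> \<ge> 0 \<Longrightarrow> norm (sphere_proj \<rho> x) = \<rho>"
  by (simp add: sphere_proj_def)

lemma closed_segment_sphere_subset:
  fixes a b :: "'a::real_inner"
  assumes "norm a = \<rho>" "norm b = \<rho>" "inner a b \<ge> 0" "0 \<le> r" "2 * r < \<rho>"
  shows "closed_segment a b \<subseteq> - cball 0 r"
proof
  fix z assume z: "z \<in> closed_segment a b"
  have "4 * r\<^sup>2 < \<rho>\<^sup>2"
    using assms(4,5) power_strict_mono[of "2 * r" \<rho> 2] by (simp add: power_mult_distrib)
  then have "r\<^sup>2 < \<rho>\<^sup>2 / 2" using zero_le_power2[of r] by linarith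
  also have "\<dots> \<le> (norm z)\<^sup>2" by (rule norm_closed_segment_sphere_ge[OF assms(1-3) z])
  finally show "z \<in> - cball 0 r" using power2_less_imp_less[of r "norm z"] by simp
qed

lemma closed_segment_sphere_proj_subset:
  assumes "0 \<le> r" "r < \<rho>" "r < norm x"
  shows "closed_segment (sphere_proj \<rho> x) x \<subseteq> - cball 0 r"
proof
  fix z assume "z \<in> closed_segment (sphere_proj \<rho> x) x"
  then have "z \<in> closed_segment ((\<rho> / norm x) *\<^sub>R x) (1 *\<^sub>R x)" by (simp add: sphere_proj_def)
  then have "min (\<rho> / norm x) 1 * norm x \<le> norm z"
    using assms by (intro norm_closed_segment_radial(1)) auto
  moreover have "min (\<rho> / norm x) 1 * norm x = min \<rho> (norm x)"
    using assms by (simp add: min_def field_simps)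
  ultimately show "z \<in> - cball 0 r" using assms by auto
qed

definition polysets :: "'a::real_normed_vector list list \<Rightarrow> 'a set" where
  "polysets Ls = (\<Union>L\<in>set Ls. polyset L)"

lemma polyset_subset_concat: "xs \<in> set xss \<Longrightarrow> polyset xs \<subseteq> polyset (concat xss)"
  by (induction xss) (auto dest: subsetD[OF polyset_append_subset1] subsetD[OF polyset_append_subset2])

definition base_dir :: "'a::euclidean_space" where
  "base_dir = (SOME b. b \<in> Basis)"

lemma norm_base_dir [simp]: "norm (base_dir :: 'a::euclidean_space) = 1"
  using someI_ex[of "\<lambda>b. b \<in> (Basis :: 'a set)"] nonempty_Basis by (auto simp: base_dir_def)

lemma closed_segment_sphere_mid_subset:
  fixes a b :: "'a::euclidean_space"
  assumes "2 \<le> DIM('a)" "norm a = \<rho>" "norm b = \<rho>" "0 \<le> r" "2 * r < \<rho>"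
  shows "closed_segment a (sphere_mid \<rho> a b) \<subseteq> - cball 0 r"
    "closed_segment (sphere_mid \<rho> a b) b \<subseteq> - cball 0 r"
proof -
  have "0 \<le> \<rho>" using assms(4,5) by linarith
  note m = sphere_mid[OF assms(1-3) this]
  show "closed_segment a (sphere_mid \<rho> a b) \<subseteq> - cball 0 r"
    by (rule closed_segment_sphere_subset[OF assms(2) m(1,2) assms(4,5)])
  show "closed_segment (sphere_mid \<rho> a b) b \<subseteq> - cball 0 r"
    using m(3) by (intro closed_segment_sphere_subset[OF m(1) assms(3) _ assms(4,5)])
      (simp add: inner_commute)
qed

definition tour :: "real \<Rightarrow> 'a::euclidean_space list \<Rightarrow> 'a list" where
  "tour \<rho> L = (let e = \<rho> *\<^sub>R base_dir; h = sphere_proj \<rho> (hd L); w = sphere_mid \<rho> e h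
               in [w, h] @ L @ rev L @ [h, w, e])"

lemma polyset_subset_tour: "polyset L \<subseteq> polyset (tour \<rho> L)"
  unfolding tour_def Let_def by (rule order_trans[OF polyset_append_subset1 polyset_append_subset2])

lemma tour_subset:
  fixes L :: "'a::euclidean_space list"
  assumes "2 \<le> DIM('a)" "0 \<le> r" "2 * r < \<rho>" "L \<noteq> []" "r < norm (hd L)"
    and G: "- cball 0 r \<subseteq> G" "polyset L \<subseteq> G"
  shows "successively (\<lambda>a b. closed_segment a b \<subseteq> G) (\<rho> *\<^sub>R base_dir # tour \<rho> L)"
    and "set (tour \<rho> L) \<subseteq> G" and "last (tour \<rho> L) = \<rho> *\<^sub>R base_dir"
proof -
  define P where "P a b \<longleftrightarrow> closed_segment a b \<subseteq> G" for a b
  define e where "e = \<rho> *\<^sub>R (base_dir :: 'a)"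
  define h where "h = sphere_proj \<rho> (hd L)"
  define w where "w = sphere_mid \<rho> e h"
  have \<rho>: "\<rho> > 0" using assms(2,3) by linarith
  have "hd L \<noteq> 0" using assms(2,5) by auto
  then have ne: "norm e = \<rho>" and nh: "norm h = \<rho>"
    using \<rho> norm_sphere_proj[of "hd L" \<rho>] by (auto simp: e_def h_def)
  have nw: "norm w = \<rho>" using sphere_mid(1)[OF assms(1) ne nh] \<rho> by (simp add: w_def)
  have arcs: "P e w" "P w e" "P h w" "P w h"
    using closed_segment_sphere_mid_subset[OF assms(1) ne nh assms(2,3)] G(1)
    unfolding P_def w_def by (auto simp: closed_segment_commute)
  have "r < \<rho>" using assms(2,3) by linarith
  then have radial: "P h (hd L)" "P (hd L) h"
    using closed_segment_sphere_proj_subset[OF assms(2) _ assms(5)] G(1)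
    unfolding P_def h_def by (auto simp: closed_segment_commute)
  have "successively P L" "successively P (rev L)"
    using successively_closed_segment_subset_polyset[of L] G(2) unfolding P_def successively_rev
    by (auto elim!: successively_mono simp: closed_segment_commute)
  moreover have "P (last L) (last L)"
    using G(2) set_subset_polyset[of L] last_in_set[OF assms(4)] unfolding P_def by auto
  ultimately have "successively P ([e, w, h] @ L @ rev L @ [h, w, e])"
    using arcs radial assms(4) by (simp add: successively_append_iff successively_Cons hd_rev last_rev)
  then show "successively (\<lambda>a b. closed_segment a b \<subseteq> G) (\<rho> *\<^sub>R base_dir # tour \<rho> L)"
    unfolding P_def tour_def Let_def e_def h_def w_def by simp
  have "e \<in> G" "w \<in> G" "h \<in> G" using ne nw nh assms(2,3) G(1) by auto
  then show "set (tour \<rho> L) \<subseteq> G"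
    using G(2) set_subset_polyset[of L] unfolding tour_def Let_def e_def h_def w_def by auto
  show "last (tour \<rho> L) = \<rho> *\<^sub>R base_dir" unfolding tour_def Let_def by simp
qed

lemma tours_subset:
  fixes Ls :: "'a::euclidean_space list list"
  assumes "2 \<le> DIM('a)" "0 \<le> r" "2 * r < \<rho>"
    and Ls: "\<And>L. L \<in> set Ls \<Longrightarrow> L \<noteq> [] \<and> r < norm (hd L) \<and> polyset L \<subseteq> G"
    and G: "- cball 0 r \<subseteq> G"
  shows "successively (\<lambda>a b. closed_segment a b \<subseteq> G) (\<rho> *\<^sub>R base_dir # concat (map (tour \<rho>) Ls)) \<and>
    set (concat (map (tour \<rho>) Ls)) \<subseteq> G \<and>
    last (\<rho> *\<^sub>R base_dir # concat (map (tour \<rho>) Ls)) = \<rho> *\<^sub>R base_dir"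
  using Ls
proof (induction Ls)
  case (Cons L Ls)
  have L: "L \<noteq> []" "r < norm (hd L)" "polyset L \<subseteq> G" using Cons.prems by auto
  note T = tour_subset[OF assms(1-3) L(1,2) G L(3)]
  have tne: "tour \<rho> L \<noteq> []" by (simp add: tour_def Let_def)
  define C where "C = concat (map (tour \<rho>) Ls)"
  have IH: "successively (\<lambda>a b. closed_segment a b \<subseteq> G) (\<rho> *\<^sub>R base_dir # C) \<and> set C \<subseteq> G \<and>
      last (\<rho> *\<^sub>R base_dir # C) = \<rho> *\<^sub>R base_dir"
    using Cons.IH Cons.prems unfolding C_def by auto
  have eq: "concat (map (tour \<rho>) (L # Ls)) = tour \<rho> L @ C" by (simp add: C_def)
  show ?case
    unfolding eq using T IH tne
    by (cases "C = []") (auto simp: successively_append_iff successively_Cons)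
qed simp

text \<open>Apart from the chains, a gadget stays outside the ball of radius \<open>\<rho>/2\<close>: its arcs join points of
  the sphere of radius \<open>\<rho>\<close> at non-obtuse angles, and it reaches each chain radially.\<close>
definition gadget :: "real \<Rightarrow> 'a::euclidean_space list list \<Rightarrow> 'a list \<Rightarrow> 'a \<Rightarrow> 'a list" where
  "gadget \<rho> Ls E u = (let e = \<rho> *\<^sub>R base_dir; h = sphere_proj \<rho> (hd E) in
     [\<rho> *\<^sub>R u, sphere_mid \<rho> (\<rho> *\<^sub>R u) e] @ (e # concat (map (tour \<rho>) Ls)) @
     [sphere_mid \<rho> e h, h] @ E)"

lemma gadget_not_Nil: "gadget \<rho> Ls E u \<noteq> []"
  by (simp add: gadget_def Let_def)

lemma hd_gadget: "hd (gadget \<rho> Ls E u) = \<rho> *\<^sub>R u"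
  by (simp add: gadget_def Let_def)

lemma last_gadget: "E \<noteq> [] \<Longrightarrow> last (gadget \<rho> Ls E u) = last E"
  by (simp add: gadget_def Let_def)

lemma polysets_subset_gadget: "polysets (E # Ls) \<subseteq> polyset (gadget \<rho> Ls E u)"
proof -
  let ?e = "\<rho> *\<^sub>R base_dir" and ?h = "sphere_proj \<rho> (hd E)"
  let ?A = "[\<rho> *\<^sub>R u, sphere_mid \<rho> (\<rho> *\<^sub>R u) ?e]"
  let ?B = "?e # concat (map (tour \<rho>) Ls)" and ?C = "[sphere_mid \<rho> ?e ?h, ?h]"
  have g: "gadget \<rho> Ls E u = ?A @ ?B @ ?C @ E" by (simp add: gadget_def Let_def)
  have "polyset E \<subseteq> polyset (gadget \<rho> Ls E u)"
    unfolding g using polyset_append_subset2[of E "?A @ ?B @ ?C"] by simp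
  moreover have "polyset L \<subseteq> polyset (gadget \<rho> Ls E u)" if "L \<in> set Ls" for L
  proof -
    have "polyset L \<subseteq> polyset (concat (map (tour \<rho>) Ls))"
      using polyset_subset_tour[of L \<rho>] polyset_subset_concat[of "tour \<rho> L" "map (tour \<rho>) Ls"] that
      by auto
    also have "\<dots> \<subseteq> polyset ?B" using polyset_append_subset2[of _ "[?e]"] by simp
    also have "\<dots> \<subseteq> polyset (gadget \<rho> Ls E u)"
      unfolding g using polyset_append_subset2[of "?B @ ?C @ E" ?A] polyset_append_subset1[of ?B "?C @ E"]
      by auto
    finally show ?thesis .
  qed
  ultimately show ?thesis by (auto simp: polysets_def)
qed

lemma polyset_gadget_subset:
  fixes Ls :: "'a::euclidean_space list list"
  assumes "2 \<le> DIM('a)" "0 \<le> r" "2 * r < \<rho>" "norm u = 1"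
    and chains: "\<And>L. L \<in> set (E # Ls) \<Longrightarrow> L \<noteq> [] \<and> r < norm (hd L)"
  shows "polyset (gadget \<rho> Ls E u) \<subseteq> - cball 0 r \<union> polysets (E # Ls)"
proof -
  define G where "G = - cball 0 r \<union> polysets (E # Ls)"
  define P where "P a b \<longleftrightarrow> closed_segment a b \<subseteq> G" for a b
  define e where "e = \<rho> *\<^sub>R (base_dir :: 'a)"
  define w where "w = sphere_mid \<rho> (\<rho> *\<^sub>R u) e"
  define h where "h = sphere_proj \<rho> (hd E)"
  define v where "v = sphere_mid \<rho> e h"
  define C where "C = concat (map (tour \<rho>) Ls)"
  have g: "gadget \<rho> Ls E u = [\<rho> *\<^sub>R u, w] @ (e # C) @ [v, h] @ E"
    by (simp add: gadget_def Let_def e_def w_def h_def v_def C_def)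
  have \<rho>: "\<rho> > 0" using assms(2,3) by linarith
  have E: "E \<noteq> []" "r < norm (hd E)" using chains by auto
  have G: "- cball 0 r \<subseteq> G" by (auto simp: G_def)
  have Ls: "\<And>L. L \<in> set Ls \<Longrightarrow> L \<noteq> [] \<and> r < norm (hd L) \<and> polyset L \<subseteq> G"
    using chains by (auto simp: G_def polysets_def)
  have T: "successively P (e # C)" "set C \<subseteq> G" "last (e # C) = e"
    using tours_subset[OF assms(1-3) Ls G] unfolding e_def P_def C_def by auto
  have "hd E \<noteq> 0" using assms(2) E(2) by auto
  then have nu: "norm (\<rho> *\<^sub>R u) = \<rho>" and ne: "norm e = \<rho>" and nh: "norm h = \<rho>"
    using \<rho> assms(4) norm_sphere_proj[of "hd E" \<rho>] by (auto simp: e_def h_def)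
  have "P (\<rho> *\<^sub>R u) w" "P w e" "P e v" "P v h"
    using closed_segment_sphere_mid_subset[OF assms(1) nu ne assms(2,3)]
      closed_segment_sphere_mid_subset[OF assms(1) ne nh assms(2,3)] G
    unfolding P_def w_def v_def by auto
  moreover have "r < \<rho>" using assms(2,3) by linarith
  then have "P h (hd E)"
    using closed_segment_sphere_proj_subset[OF assms(2) _ E(2)] G unfolding P_def h_def by auto
  moreover have "successively P E"
    using successively_closed_segment_subset_polyset[of E]
    unfolding P_def G_def polysets_def by (auto elim!: successively_mono)
  ultimately have "successively P ([\<rho> *\<^sub>R u, w] @ (e # C) @ [v, h] @ E)"
    using T E(1) by (cases "C = []") (simp_all add: successively_append_iff successively_Cons)
  moreover have "set ([\<rho> *\<^sub>R u, w] @ (e # C) @ [v, h] @ E) \<subseteq> G"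
  proof -
    have "norm w = \<rho>" "norm v = \<rho>"
      using sphere_mid(1)[OF assms(1) nu ne] sphere_mid(1)[OF assms(1) ne nh] \<rho>
      by (simp_all add: w_def v_def)
    then have "\<rho> *\<^sub>R u \<in> G" "w \<in> G" "e \<in> G" "v \<in> G" "h \<in> G"
      using nu ne nh G assms(2,3) by auto
    moreover have "set E \<subseteq> G" using set_subset_polyset[of E] by (auto simp: G_def polysets_def)
    ultimately show ?thesis using T by auto
  qed
  ultimately show ?thesis unfolding g P_def G_def by (rule polyset_subsetI)
qed

section \<open>Approximating data\<close>

definition admissible :: "nat \<times> 'a::real_normed_vector list list \<times> 'a list \<Rightarrow> bool" where
  "admissible = (\<lambda>(j, Ls, E). 1 \<le> j \<and> norm (last E) \<le> 1 / real j \<and>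
     (\<forall>L\<in>set (E # Ls). L \<noteq> [] \<and> real j + 1 \<le> norm (hd L) \<and> 0 \<notin> polyset L))"

definition approximates :: "'a::real_normed_vector set \<Rightarrow> nat \<Rightarrow> 'a set \<Rightarrow> bool" where
  "approximates T j P \<longleftrightarrow> (\<forall>x\<in>P. \<exists>t\<in>T. dist x t \<le> 1 / real j) \<and>
     (\<forall>t\<in>T \<inter> cball 0 (real j). \<exists>x\<in>P. dist t x \<le> 1 / real j)"

lemma CU_chain_to:
  fixes T :: "'a::euclidean_space set"
  assumes dim: "2 \<le> DIM('a)" and D: "\<And>U. open U \<Longrightarrow> U \<noteq> {} \<Longrightarrow> \<exists>d\<in>D. d \<in> U"
    and T: "T \<in> CU" and t: "t \<in> T" and \<epsilon>: "0 < \<epsilon>" "\<epsilon> \<le> 1"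
  obtains L where "L \<noteq> []" "real j + 1 \<le> norm (hd L)" "0 \<notin> polyset L" "set L \<subseteq> D"
    "dist t (last L) < \<epsilon> / 2" "\<And>x. x \<in> polyset L \<Longrightarrow> \<exists>s\<in>T. dist x s \<le> \<epsilon>"
proof -
  define C where "C = connected_component_set T t"
  have "C \<in> components T" using t by (simp add: C_def components_def)
  then have "\<not> bounded C" using T by (auto simp: CU_def)
  then obtain u where u: "u \<in> C" "real j + 2 < norm u"
    by (meson bounded_cball bounded_subset mem_cball_0 not_le subsetI)
  obtain cs where cs: "cs \<noteq> []" "hd cs = u" "last cs = t" "set cs \<subseteq> C"
      "successively (\<lambda>a b. dist a b < \<epsilon> / 4) cs"
    using connected_epsilon_chain[OF _ u(1), of t "\<epsilon> / 4"] t \<epsilon> by (auto simp: C_def)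
  obtain cs' where cs': "list_all2 (\<lambda>a b. dist a b < \<epsilon> / 8) cs cs'" "set cs' \<subseteq> D" "0 \<notin> polyset cs'"
    using dense_perturbation_avoiding_0[OF dim D _ cs(1), of "\<epsilon> / 8"] \<epsilon> by auto
  note hl = list_all2_hd_last[OF cs'(1) cs(1)]
  have "norm u \<le> norm (hd cs') + dist u (hd cs')"
    by (metis dist_norm norm_triangle_sub norm_minus_commute)
  then have "real j + 1 \<le> norm (hd cs')" using hl cs(2) u(2) \<epsilon> by simp
  moreover have "\<exists>s\<in>T. dist x s \<le> \<epsilon>" if x: "x \<in> polyset cs'" for x
  proof -
    have "\<exists>s\<in>T. dist x s \<le> \<epsilon> / 4 + 2 * (\<epsilon> / 8) + \<epsilon> / 8"
    proof (rule polyset_near[OF successively_dist_list_all2[OF cs'(1) cs(5)] _ x])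
      fix y assume "y \<in> set cs'"
      then obtain z where "z \<in> set cs" "dist z y < \<epsilon> / 8" using list_all2_set_rightD[OF cs'(1)] by blast
      then show "\<exists>s\<in>T. dist y s \<le> \<epsilon> / 8"
        using cs(4) connected_component_subset[of T t] unfolding C_def
        by (intro bexI[of _ z]) (auto simp: dist_commute)
    qed (use \<epsilon> in simp)
    then obtain s where "s \<in> T" "dist x s \<le> \<epsilon> / 4 + 2 * (\<epsilon> / 8) + \<epsilon> / 8" ..
    then show ?thesis using \<epsilon> by (intro bexI[of _ s]) auto
  qed
  ultimately show thesis
    using that[of cs'] hl cs'(2,3) cs(3) \<epsilon> by auto
qed

lemma compact_finite_ball_cover:
  assumes "compact K" "e > 0"
  obtains F where "finite F" "F \<subseteq> K" "K \<subseteq> (\<Union>x\<in>F. ball x e)"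
proof -
  have "\<forall>e>0. \<exists>F. finite F \<and> F \<subseteq> K \<and> K \<subseteq> (\<Union>x\<in>F. ball x e)"
    using assms(1) by (intro seq_compact_imp_totally_bounded compact_imp_seq_compact)
  then show thesis using assms(2) that by blast
qed

lemma CU_approximating_data:
  fixes T :: "'a::euclidean_space set"
  assumes dim: "2 \<le> DIM('a)" and D: "\<And>U. open U \<Longrightarrow> U \<noteq> {} \<Longrightarrow> \<exists>d\<in>D. d \<in> U"
    and T: "T \<in> CU" and j: "1 \<le> j"
  shows "\<exists>Ls E. admissible (j, Ls, E) \<and> (\<forall>L\<in>set (E # Ls). set L \<subseteq> D) \<and>
           approximates T j (polysets (E # Ls))"
proof -
  define \<epsilon> where "\<epsilon> = 1 / real j"
  have \<epsilon>: "\<epsilon> > 0" "\<epsilon> \<le> 1" using j by (auto simp: \<epsilon>_def)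
  define good where "good t L \<longleftrightarrow> L \<noteq> [] \<and> real j + 1 \<le> norm (hd L) \<and> 0 \<notin> polyset L \<and>
      set L \<subseteq> D \<and> dist t (last L) < \<epsilon> / 2 \<and> (\<forall>x\<in>polyset L. \<exists>s\<in>T. dist x s \<le> \<epsilon>)" for t L
  have good_ex: "\<exists>L. good t L" if t: "t \<in> T" for t
  proof (rule CU_chain_to[OF dim D T t \<epsilon>, where j = j])
    fix L assume "L \<noteq> []" "real j + 1 \<le> norm (hd L)" "0 \<notin> polyset L" "set L \<subseteq> D"
      "dist t (last L) < \<epsilon> / 2" "\<And>x. x \<in> polyset L \<Longrightarrow> \<exists>s\<in>T. dist x s \<le> \<epsilon>"
    then show ?thesis unfolding good_def by blast
  qed
  have "compact (T \<inter> cball 0 (real j))" using T by (simp add: CU_def closed_Int_compact)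
  then obtain F where F: "finite F" "F \<subseteq> T \<inter> cball 0 (real j)"
      "T \<inter> cball 0 (real j) \<subseteq> (\<Union>x\<in>F. ball x (\<epsilon> / 2))"
    by (rule compact_finite_ball_cover[where e = "\<epsilon> / 2"]) (use \<epsilon> in simp)
  have "\<forall>t\<in>F. \<exists>L. good t L" using good_ex F(2) by blast
  then obtain Lf where "\<forall>t\<in>F. good t (Lf t)" by (auto dest: bchoice)
  then have Lf: "\<And>t. t \<in> F \<Longrightarrow> good t (Lf t)" by blast
  have "0 \<in> T" using T by (simp add: CU_def)
  then obtain E where E: "good 0 E" using good_ex by blast
  obtain fs where fs: "set fs = F" using finite_list[OF F(1)] by blast
  define Ls where "Ls = map Lf fs"
  have good_Ls: "\<exists>t. good t L" if "L \<in> set (E # Ls)" for L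
    using that E Lf fs by (auto simp: Ls_def)
  have "norm (last E) \<le> \<epsilon>" using E \<epsilon>(1) by (simp add: good_def)
  then have "admissible (j, Ls, E)"
    using j good_Ls unfolding admissible_def good_def \<epsilon>_def by auto
  moreover have "\<forall>L\<in>set (E # Ls). set L \<subseteq> D" using good_Ls by (auto simp: good_def)
  moreover have "\<exists>t\<in>T. dist x t \<le> \<epsilon>" if "x \<in> polysets (E # Ls)" for x
    using that good_Ls by (auto simp: polysets_def good_def)
  moreover have "\<exists>x\<in>polysets (E # Ls). dist t x \<le> \<epsilon>" if t: "t \<in> T \<inter> cball 0 (real j)" for t
  proof -
    obtain f where f: "f \<in> F" "dist f t < \<epsilon> / 2" using F(3) t by auto
    have g: "good f (Lf f)" using Lf f(1) .
    then have "last (Lf f) \<in> polyset (Lf f)"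
      using set_subset_polyset[of "Lf f"] last_in_set[of "Lf f"] by (auto simp: good_def)
    moreover have "Lf f \<in> set (E # Ls)" using f(1) fs by (simp add: Ls_def)
    ultimately have "last (Lf f) \<in> polysets (E # Ls)" by (auto simp: polysets_def)
    moreover have "dist t (last (Lf f)) \<le> \<epsilon>"
      using dist_triangle[of t "last (Lf f)" f] f(2) g by (simp add: good_def dist_commute)
    ultimately show ?thesis by blast
  qed
  ultimately show ?thesis unfolding approximates_def \<epsilon>_def by blast
qed

lemma UNIV_in_CU: "(UNIV :: 'a::euclidean_space set) \<in> CU"
  unfolding CU_def using components_eq_sing_iff[of "UNIV :: 'a set"]
  by (auto simp: not_bounded_UNIV)

section \<open>The construction\<close>

locale tangent_curve =
  fixes D :: "'a::euclidean_space set"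
  assumes dim: "2 \<le> DIM('a)" and countable_D: "countable D"
    and dense_D: "\<And>U. open U \<Longrightarrow> U \<noteq> {} \<Longrightarrow> \<exists>d\<in>D. d \<in> U"
begin

definition data :: "(nat \<times> 'a list list \<times> 'a list) set" where
  "data = {(j, Ls, E). admissible (j, Ls, E) \<and> (\<forall>L\<in>set (E # Ls). set L \<subseteq> D)}"

lemma countable_data: "countable data"
proof (rule countable_subset)
  show "data \<subseteq> UNIV \<times> lists (lists D) \<times> lists D" by (auto simp: data_def)
qed (use countable_D in auto)

lemma data_not_empty: "data \<noteq> {}"
  using CU_approximating_data[OF dim dense_D UNIV_in_CU, of 1] by (auto simp: data_def)

text \<open>Every datum occurs infinitely often, as \<open>fst \<circ> prod_decode\<close> takes every value infinitely
  often.\<close>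
definition datum :: "nat \<Rightarrow> nat \<times> 'a list list \<times> 'a list" where
  "datum k = from_nat_into data (fst (prod_decode k))"

lemma datum_in_data: "datum k \<in> data"
  unfolding datum_def using data_not_empty by (rule from_nat_into)

lemma datum_recurs: "c \<in> data \<Longrightarrow> \<exists>k\<ge>m. datum k = c"
proof -
  assume "c \<in> data"
  then obtain i where "from_nat_into data i = c"
    using from_nat_into_surj[OF countable_data] by blast
  then show ?thesis
    by (intro exI[where x="prod_encode (i, m)"]) (simp add: datum_def le_prod_encode_2)
qed

lemma datum_subseq:
  fixes c :: "nat \<Rightarrow> nat \<times> 'a list list \<times> 'a list"
  assumes "\<And>n. c n \<in> data"
  obtains K where "strict_mono K" "\<And>n. datum (K n) = c n"
proof -
  have "\<forall>n m. \<exists>k. m \<le> k \<and> datum k = c n" using datum_recurs[OF assms] by blast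
  then obtain g where g: "\<And>n m. m \<le> g n m \<and> datum (g n m) = c n" by metis
  define K where "K = rec_nat (g 0 0) (\<lambda>n k. g (Suc n) (Suc k))"
  have "K (Suc n) = g (Suc n) (Suc (K n))" for n by (simp add: K_def)
  then have "strict_mono K" using g by (intro strict_monoI_Suc) (simp add: Suc_le_lessD)
  moreover have "datum (K n) = c n" for n
    using g by (cases n) (simp_all add: K_def)
  ultimately show thesis using that by blast
qed

definition level :: "nat \<Rightarrow> nat" where "level k = fst (datum k)"
definition legs :: "nat \<Rightarrow> 'a list list" where "legs k = fst (snd (datum k))"
definition tail :: "nat \<Rightarrow> 'a list" where "tail k = snd (snd (datum k))"
definition endpoint :: "nat \<Rightarrow> 'a" where "endpoint k = last (tail k)"
definition radius :: "nat \<Rightarrow> real" where "radius k = 2 * (real (level k) + 1)"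

lemma datum_eq: "datum k = (level k, legs k, tail k)"
  by (simp add: level_def legs_def tail_def)

lemma level_ge_1: "1 \<le> level k"
  and tail_chains: "\<And>L. L \<in> set (tail k # legs k) \<Longrightarrow>
    L \<noteq> [] \<and> real (level k) + 1 \<le> norm (hd L) \<and> 0 \<notin> polyset L"
  and norm_endpoint_le: "norm (endpoint k) \<le> 1 / real (level k)"
  using datum_in_data[of k] unfolding datum_eq by (auto simp: data_def admissible_def endpoint_def)

lemma tail_not_Nil: "tail k \<noteq> []"
  using tail_chains by auto

lemma endpoint_in_tail: "endpoint k \<in> polyset (tail k)"
  using tail_not_Nil set_subset_polyset last_in_set by (fastforce simp: endpoint_def)

lemma endpoint_nonzero: "endpoint k \<noteq> 0"
  using endpoint_in_tail[of k] tail_chains[of "tail k" k] by auto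

text \<open>Each gadget starts in the direction of the previous endpoint, so that consecutive scaled
  gadgets can be joined by a radial segment.\<close>
definition dir :: "nat \<Rightarrow> 'a" where
  "dir k = (case k of 0 \<Rightarrow> base_dir | Suc i \<Rightarrow> endpoint i /\<^sub>R norm (endpoint i))"

lemma norm_dir: "norm (dir k) = 1"
  by (cases k) (auto simp: dir_def endpoint_nonzero)

definition piece :: "nat \<Rightarrow> 'a list" where
  "piece k = gadget (radius k) (legs k) (tail k) (dir k)"

lemma piece_not_Nil: "piece k \<noteq> []"
  by (simp add: piece_def gadget_not_Nil)

lemma hd_piece: "hd (piece k) = radius k *\<^sub>R dir k"
  by (simp add: piece_def hd_gadget)

lemma last_piece: "last (piece k) = endpoint k"
  by (simp add: piece_def last_gadget tail_not_Nil endpoint_def)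

lemma polyset_piece_subset: "polyset (piece k) \<subseteq> - cball 0 (level k) \<union> polysets (tail k # legs k)"
  unfolding piece_def radius_def
proof (rule polyset_gadget_subset[OF dim _ _ norm_dir])
  fix L assume "L \<in> set (tail k # legs k)"
  then show "L \<noteq> [] \<and> real (level k) < norm (hd L)" using tail_chains[of L k] by auto
qed simp_all

lemma polysets_subset_piece: "polysets (tail k # legs k) \<subseteq> polyset (piece k)"
  unfolding piece_def by (rule polysets_subset_gadget)

lemma zero_notin_piece: "0 \<notin> polyset (piece k)"
  using polyset_piece_subset[of k] tail_chains[of _ k] unfolding polysets_def by auto

lemma hd_piece_in: "radius k *\<^sub>R dir k \<in> polyset (piece k)"
  using hd_in_set[OF piece_not_Nil, of k] set_subset_polyset[of "piece k"] by (auto simp: hd_piece)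

lemma endpoint_in_piece: "endpoint k \<in> polyset (piece k)"
  using last_in_set[OF piece_not_Nil, of k] set_subset_polyset[of "piece k"] by (auto simp: last_piece)

lemma radius_pos: "radius k > 0"
  by (simp add: radius_def)

lemma norm_hd_piece: "norm (radius k *\<^sub>R dir k) = radius k"
  using radius_pos[of k] by (simp add: norm_dir)

definition inner_rad :: "nat \<Rightarrow> real" where
  "inner_rad k = infdist 0 (polyset (piece k))"

definition outer_rad :: "nat \<Rightarrow> real" where
  "outer_rad k = Max (norm ` set (piece k))"

lemma inner_rad_pos: "inner_rad k > 0"
  unfolding inner_rad_def using piece_not_Nil zero_notin_piece
  by (intro infdist_pos_not_in_closed) (auto simp: compact_imp_closed compact_polyset)

lemma inner_rad_le: "x \<in> polyset (piece k) \<Longrightarrow> inner_rad k \<le> norm x"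
  unfolding inner_rad_def using infdist_le[of x "polyset (piece k)" 0] by simp

lemma norm_le_outer_rad: "x \<in> polyset (piece k) \<Longrightarrow> norm x \<le> outer_rad k"
proof -
  have "set (piece k) \<subseteq> cball 0 (outer_rad k)" unfolding outer_rad_def by (auto intro!: Max_ge)
  then have "polyset (piece k) \<subseteq> cball 0 (outer_rad k)" by (rule polyset_subset_cball)
  then show "x \<in> polyset (piece k) \<Longrightarrow> norm x \<le> outer_rad k" by auto
qed

lemma radius_le_outer_rad: "radius k \<le> outer_rad k"
  using norm_le_outer_rad[OF hd_piece_in] norm_hd_piece by simp

lemma outer_rad_ge_1: "1 \<le> outer_rad k"
  using radius_le_outer_rad[of k] by (simp add: radius_def)

lemma inner_rad_le_1: "inner_rad k \<le> 1"
proof -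
  have "1 / real (level k) \<le> 1" using level_ge_1[of k] by simp
  then show ?thesis using inner_rad_le[OF endpoint_in_piece[of k]] norm_endpoint_le[of k] by linarith
qed

text \<open>The scales shrink fast enough that the scaled gadgets lie in disjoint nested annuli and that
  the \<open>k\<close>-th scaled gadget, parametrised as a polygonal path, is \<open>2^-(k+1)\<close>-Lipschitz.\<close>
definition scale_cap :: "nat \<Rightarrow> real" where
  "scale_cap k = (1/2) ^ Suc k / (outer_rad k * 2 ^ (length (piece k) + 3))"

fun scale :: "nat \<Rightarrow> real" where
  "scale 0 = scale_cap 0"
| "scale (Suc k) = min (scale k * inner_rad k / outer_rad (Suc k)) (scale_cap (Suc k))"

lemma scale_pos: "scale k > 0"
  using outer_rad_ge_1
  by (induction k) (auto simp: scale_cap_def inner_rad_pos less_le_trans[OF zero_less_one])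

definition inner_bound :: "nat \<Rightarrow> real" where "inner_bound k = scale k * inner_rad k"
definition outer_bound :: "nat \<Rightarrow> real" where "outer_bound k = scale k * outer_rad k"

lemma outer_bound_Suc_le: "outer_bound (Suc k) \<le> inner_bound k"
proof -
  have "scale (Suc k) * outer_rad (Suc k) \<le>
      (scale k * inner_rad k / outer_rad (Suc k)) * outer_rad (Suc k)"
    using outer_rad_ge_1[of "Suc k"] by (intro mult_right_mono) auto
  then show ?thesis using outer_rad_ge_1[of "Suc k"] by (simp add: inner_bound_def outer_bound_def)
qed

lemma inner_le_outer_bound: "inner_bound k \<le> outer_bound k"
  using inner_rad_le[OF endpoint_in_piece[of k]] norm_le_outer_rad[OF endpoint_in_piece[of k]]
    scale_pos[of k]
  by (simp add: inner_bound_def outer_bound_def)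

lemma outer_le_inner_bound: "m < n \<Longrightarrow> outer_bound n \<le> inner_bound m"
proof (induction n)
  case (Suc n)
  show ?case
  proof (cases "m = n")
    case False
    then have "outer_bound n \<le> inner_bound m" using Suc by simp
    then show ?thesis using outer_bound_Suc_le[of n] inner_le_outer_bound[of n] by linarith
  qed (simp add: outer_bound_Suc_le)
qed simp

lemma outer_bound_lipschitz: "outer_bound k * 2 ^ (length (piece k) + 3) \<le> (1/2) ^ Suc k"
proof -
  have "scale k \<le> scale_cap k" by (cases k) auto
  then have "scale k * (outer_rad k * 2 ^ (length (piece k) + 3)) \<le>
      scale_cap k * (outer_rad k * 2 ^ (length (piece k) + 3))"
    using outer_rad_ge_1[of k] by (intro mult_right_mono) auto
  then show ?thesis using outer_rad_ge_1[of k] by (simp add: scale_cap_def outer_bound_def mult.assoc)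
qed

lemma outer_bound_pos: "outer_bound k > 0"
  using scale_pos[of k] outer_rad_ge_1[of k] by (simp add: outer_bound_def)

lemma outer_bound_le_half_power: "outer_bound k \<le> (1/2) ^ Suc k"
proof -
  have "outer_bound k \<le> outer_bound k * 2 ^ (length (piece k) + 3)"
    using outer_bound_pos[of k] by simp
  also have "\<dots> \<le> (1/2) ^ Suc k" by (rule outer_bound_lipschitz)
  finally show ?thesis .
qed

lemma scale_le_half_power: "scale k \<le> (1/2) ^ Suc k"
proof -
  have "scale k * 1 \<le> outer_bound k"
    unfolding outer_bound_def using scale_pos[of k] outer_rad_ge_1[of k] by (intro mult_left_mono) auto
  then show ?thesis using outer_bound_le_half_power[of k] by simp
qed

lemma decseq_scale: "decseq scale"
proof (rule decseq_SucI)
  fix k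
  have "scale (Suc k) \<le> scale k * inner_rad k / outer_rad (Suc k)" by simp
  also have "\<dots> \<le> scale k * 1 / 1"
    using scale_pos[of k] inner_rad_le_1[of k] inner_rad_pos[of k] outer_rad_ge_1[of "Suc k"]
    by (intro frac_le mult_left_mono) auto
  finally show "scale (Suc k) \<le> scale k" by simp
qed

declare scale.simps(2) [simp del]

definition scaled_piece :: "nat \<Rightarrow> 'a list" where
  "scaled_piece k = map (scaleR (scale k)) (piece k) @ [scale (Suc k) *\<^sub>R hd (piece (Suc k))]"

definition curve_image :: "'a set" where
  "curve_image = insert 0 (\<Union>k. polyset (scaled_piece k))"

lemma scaled_piece_not_Nil: "scaled_piece k \<noteq> []"
  by (simp add: scaled_piece_def)

lemma norm_link_end: "norm (scale (Suc k) *\<^sub>R hd (piece (Suc k))) = scale (Suc k) * radius (Suc k)"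
  using scale_pos[of "Suc k"] radius_pos[of "Suc k"] by (simp add: hd_piece norm_dir)

lemma set_scaled_piece_subset: "set (scaled_piece k) \<subseteq> cball 0 (outer_bound k)"
proof
  fix x assume "x \<in> set (scaled_piece k)"
  then consider w where "w \<in> set (piece k)" "x = scale k *\<^sub>R w"
    | "x = scale (Suc k) *\<^sub>R hd (piece (Suc k))"
    by (auto simp: scaled_piece_def)
  then show "x \<in> cball 0 (outer_bound k)"
  proof cases
    case 1
    then have "norm w \<le> outer_rad k" using norm_le_outer_rad set_subset_polyset by blast
    then show ?thesis using 1 scale_pos[of k] by (simp add: outer_bound_def mult_left_mono)
  next
    case 2
    have "norm x = scale (Suc k) * radius (Suc k)" using 2 norm_link_end[of k] by simp
    also have "\<dots> \<le> outer_bound (Suc k)"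
      using radius_le_outer_rad[of "Suc k"] scale_pos[of "Suc k"] by (simp add: outer_bound_def)
    also have "\<dots> \<le> outer_bound k" using outer_bound_Suc_le[of k] inner_le_outer_bound[of k] by linarith
    finally show ?thesis by simp
  qed
qed

lemma lipschitz_on_scaled_piece: "((1/2) ^ Suc k)-lipschitz_on {0..1} (polypath (scaled_piece k))"
proof -
  have "(2 ^ length (scaled_piece k) * (2 * outer_bound k))-lipschitz_on {0..1}
      (polypath (scaled_piece k))"
    using outer_bound_pos[of k] by (intro lipschitz_on_polypath set_scaled_piece_subset) auto
  moreover have "2 ^ length (scaled_piece k) * (2 * outer_bound k) =
      outer_bound k * 2 ^ (length (piece k) + 2)"
    by (simp add: scaled_piece_def power_add)
  moreover have "\<dots> \<le> outer_bound k * 2 ^ (length (piece k) + 3)"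
    using outer_bound_pos[of k] by (intro mult_left_mono power_increasing) auto
  ultimately show ?thesis
    using outer_bound_lipschitz[of k] by (auto intro: lipschitz_on_mono)
qed

lemma polypath_scaled_piece_1: "polypath (scaled_piece k) 1 = polypath (scaled_piece (Suc k)) 0"
proof -
  have "polypath (scaled_piece k) 1 = last (scaled_piece k)"
    using pathfinish_polypath[OF scaled_piece_not_Nil] by (simp add: pathfinish_def)
  also have "\<dots> = hd (scaled_piece (Suc k))"
    using piece_not_Nil[of "Suc k"] by (simp add: scaled_piece_def hd_map)
  also have "\<dots> = polypath (scaled_piece (Suc k)) 0"
    using pathstart_polypath[of "hd (scaled_piece (Suc k))" "tl (scaled_piece (Suc k))"]
      scaled_piece_not_Nil[of "Suc k"] by (simp add: pathstart_def)
  finally show ?thesis .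
qed

lemma image_polypath_scaled_piece: "polypath (scaled_piece k) ` {0..1} = polyset (scaled_piece k)"
  using path_image_polypath[OF scaled_piece_not_Nil] by (simp add: path_image_def)

lemma curve_image_parametrization:
  obtains f :: "real \<Rightarrow> 'a" where "1-lipschitz_on {0..1} f" "f 0 = 0" "f ` {0..1} = curve_image"
proof
  let ?p = "\<lambda>k. polypath (scaled_piece k)"
  have "norm (?p k t) \<le> (1/2) ^ Suc k" if "t \<in> {0..1}" for k t
  proof -
    have "?p k t \<in> cball 0 (outer_bound k)"
      using that polyset_subset_cball[OF set_scaled_piece_subset] image_polypath_scaled_piece by blast
    then show ?thesis using outer_bound_le_half_power[of k] by simp
  qed
  then show "1-lipschitz_on {0..1} (dyadic_concat ?p)"
    by (intro lipschitz_on_dyadic_concat lipschitz_on_scaled_piece polypath_scaled_piece_1)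
  show "dyadic_concat ?p ` {0..1} = curve_image"
    unfolding dyadic_concat_image[of ?p, OF polypath_scaled_piece_1] curve_image_def
      image_polypath_scaled_piece ..
qed simp

lemma polyset_scaled_piece:
  "polyset (scaled_piece k) = scaleR (scale k) ` polyset (piece k) \<union>
     closed_segment (scale k *\<^sub>R endpoint k) (scale (Suc k) *\<^sub>R hd (piece (Suc k)))"
proof -
  have "last (map (scaleR (scale k)) (piece k)) = scale k *\<^sub>R endpoint k"
    using piece_not_Nil[of k] by (simp add: last_map last_piece)
  then show ?thesis
    unfolding scaled_piece_def using piece_not_Nil[of k]
    by (subst polyset_append) (auto simp: polyset_scaleR)
qed

lemma norm_link_bounds:
  assumes "z \<in> closed_segment (scale k *\<^sub>R endpoint k) (scale (Suc k) *\<^sub>R hd (piece (Suc k)))"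
  shows "scale (Suc k) * radius (Suc k) \<le> norm z" "norm z \<le> scale k * norm (endpoint k)"
proof -
  define d where "d = endpoint k /\<^sub>R norm (endpoint k)"
  have nd: "norm d = 1" using endpoint_nonzero[of k] by (simp add: d_def)
  have "scale k *\<^sub>R endpoint k = (scale k * norm (endpoint k)) *\<^sub>R d"
    using endpoint_nonzero[of k] by (simp add: d_def)
  moreover have "scale (Suc k) *\<^sub>R hd (piece (Suc k)) = (scale (Suc k) * radius (Suc k)) *\<^sub>R d"
    by (simp add: hd_piece dir_def d_def)
  ultimately have z: "z \<in> closed_segment
      ((scale k * norm (endpoint k)) *\<^sub>R d) ((scale (Suc k) * radius (Suc k)) *\<^sub>R d)"
    using assms by simp
  have "scale (Suc k) * radius (Suc k) \<le> outer_bound (Suc k)"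
    using radius_le_outer_rad[of "Suc k"] scale_pos[of "Suc k"] by (simp add: outer_bound_def)
  also have "\<dots> \<le> inner_bound k" by (rule outer_bound_Suc_le)
  also have "\<dots> \<le> scale k * norm (endpoint k)"
    using inner_rad_le[OF endpoint_in_piece[of k]] scale_pos[of k] by (simp add: inner_bound_def)
  finally have le: "scale (Suc k) * radius (Suc k) \<le> scale k * norm (endpoint k)" .
  have "0 \<le> scale k * norm (endpoint k)" "0 \<le> scale (Suc k) * radius (Suc k)"
    using scale_pos[of k] scale_pos[of "Suc k"] radius_pos[of "Suc k"] by auto
  from norm_closed_segment_radial[OF this z] le nd
  show "scale (Suc k) * radius (Suc k) \<le> norm z" "norm z \<le> scale k * norm (endpoint k)"
    by (simp_all add: min_absorb2 max_absorb1)
qed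

lemma norm_scaled_piece_bounds:
  "z \<in> scaleR (scale k) ` polyset (piece k) \<Longrightarrow> inner_bound k \<le> norm z \<and> norm z \<le> outer_bound k"
  using inner_rad_le norm_le_outer_rad scale_pos[of k]
  by (auto simp: inner_bound_def outer_bound_def intro: mult_left_mono)

lemma norm_scaled_piece_before:
  assumes "k < K" "z \<in> polyset (scaled_piece k)"
  shows "scale K * radius K \<le> norm z"
proof -
  have start: "scale K * radius K \<le> outer_bound K"
    using radius_le_outer_rad[of K] scale_pos[of K] by (simp add: outer_bound_def)
  show ?thesis
  proof (cases "z \<in> scaleR (scale k) ` polyset (piece k)")
    case True
    then show ?thesis
      using norm_scaled_piece_bounds outer_le_inner_bound[OF assms(1)] start by fastforce
  next
    case False
    then have l: "scale (Suc k) * radius (Suc k) \<le> norm z"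
      using assms(2) norm_link_bounds(1) by (auto simp: polyset_scaled_piece)
    show ?thesis
    proof (cases "Suc k = K")
      case False
      then have "outer_bound K \<le> inner_bound (Suc k)" using assms(1) by (intro outer_le_inner_bound) simp
      moreover have "inner_bound (Suc k) \<le> scale (Suc k) * radius (Suc k)"
        using inner_rad_le[OF hd_piece_in[of "Suc k"]] norm_hd_piece scale_pos[of "Suc k"]
        by (simp add: inner_bound_def)
      ultimately show ?thesis using start l by linarith
    qed (use l in simp)
  qed
qed

lemma norm_scaled_piece_after:
  assumes "K < k" "z \<in> polyset (scaled_piece k)"
  shows "norm z \<le> scale K * norm (endpoint K)"
proof -
  have "norm z \<le> outer_bound k"
    using assms(2) polyset_subset_cball[OF set_scaled_piece_subset[of k]] by auto
  also have "\<dots> \<le> inner_bound K" by (rule outer_le_inner_bound[OF assms(1)])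
  also have "\<dots> \<le> scale K * norm (endpoint K)"
    using inner_rad_le[OF endpoint_in_piece[of K]] scale_pos[of K] by (simp add: inner_bound_def)
  finally show ?thesis .
qed

lemma curve_image_cases:
  assumes "x \<in> curve_image" "norm x \<le> real (level K) * scale K"
  shows "(1 / scale K) *\<^sub>R x \<in> polyset (piece K) \<or> norm x \<le> scale K * norm (endpoint K)"
proof (cases "x = 0")
  case False
  then obtain k where k: "x \<in> polyset (scaled_piece k)" using assms(1) by (auto simp: curve_image_def)
  have sK: "scale K > 0" by (rule scale_pos)
  show ?thesis
  proof (cases k K rule: linorder_cases)
    case less
    have "real (level K) * scale K < scale K * radius K" using sK by (simp add: radius_def)
    then show ?thesis using norm_scaled_piece_before[OF less k] assms(2) by linarith
  next
    case equal
    then show ?thesis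
      using k norm_link_bounds(2)[of _ K] sK by (auto simp: polyset_scaled_piece)
  next
    case greater
    then show ?thesis using norm_scaled_piece_after[OF greater k] by simp
  qed
qed (use scale_pos[of K] in simp)

lemma scaled_piece_subset_curve_image: "scaleR (scale K) ` polyset (piece K) \<subseteq> curve_image"
  by (auto simp: curve_image_def polyset_scaled_piece)

section \<open>Blow-ups\<close>

lemma blowup_near:
  assumes approx: "approximates T (level K) (polysets (tail K # legs K))" and "0 \<in> T"
    and R: "R \<le> real (level K)" and a: "a \<in> (\<lambda>y. (1 / scale K) *\<^sub>R y) ` curve_image \<inter> cball 0 R"
  shows "\<exists>t\<in>T. dist a t \<le> 1 / real (level K)"
proof -
  obtain x where x: "x \<in> curve_image" "a = (1 / scale K) *\<^sub>R x" using a by auto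
  have sK: "scale K > 0" by (rule scale_pos)
  have na: "norm a \<le> real (level K)" using a R by auto
  then have "norm x \<le> real (level K) * scale K" using x(2) sK by (simp add: field_simps)
  then consider "a \<in> polyset (piece K)" | "norm x \<le> scale K * norm (endpoint K)"
    using curve_image_cases[OF x(1)] x(2) by blast
  then show ?thesis
  proof cases
    case 1
    then have "a \<in> polysets (tail K # legs K)" using polyset_piece_subset[of K] na by auto
    then show ?thesis using approx by (auto simp: approximates_def)
  next
    case 2
    then have "norm a \<le> norm (endpoint K)" using x(2) sK by (simp add: divide_le_eq mult.commute)
    then have "norm a \<le> 1 / real (level K)" using norm_endpoint_le[of K] by linarith
    then show ?thesis using \<open>0 \<in> T\<close> by (intro bexI[of _ 0]) auto
  qed
qed

lemma near_blowup:
  assumes approx: "approximates T (level K) (polysets (tail K # legs K))"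
    and R: "R \<le> real (level K)" and t: "t \<in> T \<inter> cball 0 R"
  shows "\<exists>b\<in>(\<lambda>y. (1 / scale K) *\<^sub>R y) ` curve_image. dist t b \<le> 1 / real (level K)"
proof -
  have "t \<in> T \<inter> cball 0 (real (level K))" using t R by auto
  then have "\<exists>p\<in>polysets (tail K # legs K). dist t p \<le> 1 / real (level K)"
    using approx unfolding approximates_def by blast
  then obtain p where p: "p \<in> polysets (tail K # legs K)" "dist t p \<le> 1 / real (level K)" ..
  then have "scale K *\<^sub>R p \<in> curve_image"
    using polysets_subset_piece scaled_piece_subset_curve_image by blast
  moreover have "(1 / scale K) *\<^sub>R (scale K *\<^sub>R p) = p" using scale_pos[of K] by simp
  ultimately have "p \<in> (\<lambda>y. (1 / scale K) *\<^sub>R y) ` curve_image" by (metis image_eqI)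
  then show ?thesis using p(2) by blast
qed

lemma AW_converges_blowups:
  assumes "0 \<in> T" and level: "\<And>n. level (K n) = n + 1"
    and approx: "\<And>n. approximates T (level (K n)) (polysets (tail (K n) # legs (K n)))"
  shows "AW_converges (\<lambda>n. (\<lambda>y. (1 / scale (K n)) *\<^sub>R y) ` curve_image) T"
  unfolding AW_converges_def
proof (intro allI impI conjI)
  fix R :: real
  let ?Y = "\<lambda>n. (\<lambda>y. (1 / scale (K n)) *\<^sub>R y) ` curve_image"
  show "((\<lambda>n. exc (?Y n \<inter> cball 0 R) T) \<longlongrightarrow> 0) sequentially"
  proof (rule exc_tendsto_0I)
    fix \<epsilon> :: real assume "\<epsilon> > 0"
    show "\<forall>\<^sub>F n in sequentially. \<forall>a\<in>?Y n \<inter> cball 0 R. \<exists>b\<in>T. dist a b \<le> \<epsilon>"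
      using eventually_large_Suc[OF \<open>\<epsilon> > 0\<close>, of R]
    proof eventually_elim
      case (elim n)
      then show ?case
        using blowup_near[OF approx[of n] \<open>0 \<in> T\<close>] unfolding level by force
    qed
  qed
  show "((\<lambda>n. exc (T \<inter> cball 0 R) (?Y n)) \<longlongrightarrow> 0) sequentially"
  proof (rule exc_tendsto_0I)
    fix \<epsilon> :: real assume "\<epsilon> > 0"
    show "\<forall>\<^sub>F n in sequentially. \<forall>t\<in>T \<inter> cball 0 R. \<exists>b\<in>?Y n. dist t b \<le> \<epsilon>"
      using eventually_large_Suc[OF \<open>\<epsilon> > 0\<close>, of R]
    proof eventually_elim
      case (elim n)
      then show ?case
        using near_blowup[OF approx[of n]] unfolding level by force
    qed
  qed
qed

lemma CU_subset_Tan_curve_image: "CU \<subseteq> Tan curve_image 0"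
proof
  fix T :: "'a set" assume T: "T \<in> CU"
  define good where "good n c \<longleftrightarrow> c \<in> data \<and> fst c = n + 1 \<and>
      approximates T (n + 1) (polysets (snd (snd c) # fst (snd c)))" for n c
  have "\<forall>n. \<exists>c. good n c"
  proof
    fix n
    obtain Ls E where "admissible (n + 1, Ls, E)" "\<forall>L\<in>set (E # Ls). set L \<subseteq> D"
        "approximates T (n + 1) (polysets (E # Ls))"
      using CU_approximating_data[OF dim dense_D T, of "n + 1"] by auto
    then have "good n (n + 1, Ls, E)" by (simp add: good_def data_def)
    then show "\<exists>c. good n c" ..
  qed
  then obtain c where c: "\<And>n. good n (c n)" using choice by blast
  obtain K where K: "strict_mono K" "\<And>n. datum (K n) = c n"
    using datum_subseq[of c] c by (auto simp: good_def)
  have level: "level (K n) = n + 1"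
    and approx: "approximates T (level (K n)) (polysets (tail (K n) # legs (K n)))" for n
    using c[of n] K(2)[of n] by (simp_all add: good_def level_def legs_def tail_def)
  define r where "r n = scale (K n)" for n
  have r_pos: "\<forall>n. r n > 0" by (simp add: r_def scale_pos)
  have "decseq r"
    using decseq_scale K(1) by (auto simp: decseq_def r_def strict_mono_less_eq)
  moreover have "r \<longlonglongrightarrow> 0"
  proof (rule tendsto_sandwich[of "\<lambda>_. 0" _ _ "\<lambda>n. (1/2::real) ^ n"])
    have "r n \<le> (1/2) ^ n" for n
      using scale_le_half_power[of "K n"] power_decreasing[of n "Suc (K n)" "1/2::real"]
        seq_suble[OF K(1), of n] unfolding r_def by simp
    then show "\<forall>\<^sub>F n in sequentially. r n \<le> (1/2) ^ n" by simp
    show "\<forall>\<^sub>F n in sequentially. 0 \<le> r n" using r_pos by (simp add: less_imp_le)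
    show "(\<lambda>n. (1/2::real) ^ n) \<longlonglongrightarrow> 0" by (rule LIMSEQ_power_zero) simp
  qed simp
  moreover have "AW_converges (\<lambda>n. (\<lambda>y. (1 / r n) *\<^sub>R (y - 0)) ` curve_image) T"
    using AW_converges_blowups[OF _ level approx] T by (simp add: r_def CU_def)
  moreover have "closed T" "0 \<in> T" using T by (simp_all add: CU_def)
  ultimately show "T \<in> Tan curve_image 0"
    using r_pos unfolding Tan_def by blast
qed

lemma connected_curve_image: "connected curve_image"
proof -
  obtain f :: "real \<Rightarrow> 'a" where "1-lipschitz_on {0..1} f" "f 0 = 0" "f ` {0..1} = curve_image"
    by (rule curve_image_parametrization)
  then show ?thesis
    by (metis connected_Icc connected_continuous_image lipschitz_on_continuous_on)
qed

lemma Tan_curve_image: "Tan curve_image 0 = CU"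
proof
  have "scale 0 *\<^sub>R (radius 0 *\<^sub>R dir 0) \<in> curve_image"
    using scaled_piece_subset_curve_image hd_piece_in by blast
  moreover have "scale 0 *\<^sub>R (radius 0 *\<^sub>R dir 0) \<noteq> 0"
    using scale_pos[of 0] radius_pos[of 0] norm_dir[of 0] by auto
  ultimately show "Tan curve_image 0 \<subseteq> CU"
    by (rule Tan_connected_subset_CU[OF connected_curve_image])
qed (rule CU_subset_Tan_curve_image)

end

theorem theoremA1:
  assumes "CARD('n::finite) \<ge> 2"
  shows "\<exists>f :: real \<Rightarrow> real ^ 'n. (\<exists>L::real. L-lipschitz_on {0..1} f) \<and> f 0 = 0 \<and>
           Tan (f ` {0..1}) 0 = CU"
proof -
  obtain D :: "(real ^ 'n) set" where "countable D" "\<And>U. open U \<Longrightarrow> U \<noteq> {} \<Longrightarrow> \<exists>d\<in>D. d \<in> U"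
    using countable_dense_exists by blast
  then interpret tangent_curve D
    using assms by unfold_locales auto
  obtain f :: "real \<Rightarrow> real ^ 'n"
    where f: "1-lipschitz_on {0..1} f" "f 0 = 0" "f ` {0..1} = curve_image"
    by (rule curve_image_parametrization)
  show ?thesis
    by (intro exI[of _ f] conjI exI[of _ 1]) (simp_all add: f Tan_curve_image)
qed

end
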